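(* Let $\phi(x)$ be a formula of Peano Arithmetic (PA) with a single free variable $x$. Then there exist sentences (formulas with no free variables) $\sigma$ and $\tau$ of PA such that $$\mathrm{PA} \vdash \sigma \leftrightarrow \phi(\lceil \tau \rceil) \quad\text{and}\quad \mathrm{PA} \vdash \tau \leftrightarrow \lnot \phi(\lceil \sigma \rceil).$$
   Context: Peano Arithmetic (PA) is the first-order theory in the language with constant $0$, unary function symbol $S$ (successor), binary function symbols $+,*$, binary relation symbols $=,<,>$, the usual logical connectives and quantifiers, and variables $x_0,x_1,x_2,\dots$, with the standard axioms for successor, addition, multiplication, equality and the induction scheme. $\mathrm{PA}\vdash\chi$ means $\chi$ is derivable in PA. For a formula $\psi$, $\lceil \psi \rceil\in\mathbb{N}$ denotes its Gödel number under a fixed effective injective encoding of formulas by natural numbers (e.g. assign each symbol a positive integer code and map the string $s_1\cdots s_k$ with codes $n_1,\dots,n_k$ to $2^{n_1}3^{n_2}\cdots p_k^{n_k}$). When a natural number $n$ appears as an argument inside a PA formula, it stands for the numeral $S^{(n)}0 = S\cdots S0$ ($n$ copies of $S$); thus $\phi(\lceil\tau\rceil)$ is the result of substituting the numeral for $\lceil\tau\rceil$ for the free variable $x$ of $\phi$. *)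

theory Defs
  imports Main "HOL-Library.Nat_Bijection"
begin

datatype tm = Zero | Var nat | Succ tm | Plus tm tm | Times tm tm

datatype fm =
    Eq tm tm | Less tm tm | Greater tm tm
  | Neg fm | Conj fm fm | Disj fm fm | Imp fm fm | Iff fm fm
  | All nat fm | Ex nat fm

primrec vars_tm :: "tm \<Rightarrow> nat set" where
  "vars_tm Zero = {}"
| "vars_tm (Var i) = {i}"
| "vars_tm (Succ t) = vars_tm t"
| "vars_tm (Plus s t) = vars_tm s \<union> vars_tm t"
| "vars_tm (Times s t) = vars_tm s \<union> vars_tm t"

primrec fv :: "fm \<Rightarrow> nat set" where
  "fv (Eq s t) = vars_tm s \<union> vars_tm t"
| "fv (Less s t) = vars_tm s \<union> vars_tm t"
| "fv (Greater s t) = vars_tm s \<union> vars_tm t"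
| "fv (Neg a) = fv a"
| "fv (Conj a b) = fv a \<union> fv b"
| "fv (Disj a b) = fv a \<union> fv b"
| "fv (Imp a b) = fv a \<union> fv b"
| "fv (Iff a b) = fv a \<union> fv b"
| "fv (All x a) = fv a - {x}"
| "fv (Ex x a) = fv a - {x}"

definition sentence :: "fm \<Rightarrow> bool" where
  "sentence a \<longleftrightarrow> fv a = {}"

primrec num :: "nat \<Rightarrow> tm" where
  "num 0 = Zero"
| "num (Suc n) = Succ (num n)"

text \<open>Substitution of a term for the free occurrences of a variable
 (no renaming; only used when the term is substitutable, e.g. closed).\<close>
primrec subst_tm :: "nat \<Rightarrow> tm \<Rightarrow> tm \<Rightarrow> tm" where
  "subst_tm x u Zero = Zero"
| "subst_tm x u (Var i) = (if i = x then u else Var i)"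
| "subst_tm x u (Succ t) = Succ (subst_tm x u t)"
| "subst_tm x u (Plus s t) = Plus (subst_tm x u s) (subst_tm x u t)"
| "subst_tm x u (Times s t) = Times (subst_tm x u s) (subst_tm x u t)"

primrec subst :: "nat \<Rightarrow> tm \<Rightarrow> fm \<Rightarrow> fm" where
  "subst x u (Eq s t) = Eq (subst_tm x u s) (subst_tm x u t)"
| "subst x u (Less s t) = Less (subst_tm x u s) (subst_tm x u t)"
| "subst x u (Greater s t) = Greater (subst_tm x u s) (subst_tm x u t)"
| "subst x u (Neg a) = Neg (subst x u a)"
| "subst x u (Conj a b) = Conj (subst x u a) (subst x u b)"
| "subst x u (Disj a b) = Disj (subst x u a) (subst x u b)"
| "subst x u (Imp a b) = Imp (subst x u a) (subst x u b)"
| "subst x u (Iff a b) = Iff (subst x u a) (subst x u b)"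
| "subst x u (All y a) = (if y = x then All y a else All y (subst x u a))"
| "subst x u (Ex y a) = (if y = x then Ex y a else Ex y (subst x u a))"

primrec substitutable :: "nat \<Rightarrow> tm \<Rightarrow> fm \<Rightarrow> bool" where
  "substitutable x u (Eq s t) = True"
| "substitutable x u (Less s t) = True"
| "substitutable x u (Greater s t) = True"
| "substitutable x u (Neg a) = substitutable x u a"
| "substitutable x u (Conj a b) = (substitutable x u a \<and> substitutable x u b)"
| "substitutable x u (Disj a b) = (substitutable x u a \<and> substitutable x u b)"
| "substitutable x u (Imp a b) = (substitutable x u a \<and> substitutable x u b)"
| "substitutable x u (Iff a b) = (substitutable x u a \<and> substitutable x u b)"
| "substitutable x u (All y a) =
     (x \<notin> fv (All y a) \<or> (y \<notin> vars_tm u \<and> substitutable x u a))"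
| "substitutable x u (Ex y a) =
     (x \<notin> fv (Ex y a) \<or> (y \<notin> vars_tm u \<and> substitutable x u a))"

text \<open>Prime formulas (atomic and quantified) get arbitrary truth values.\<close>
primrec peval :: "(fm \<Rightarrow> bool) \<Rightarrow> fm \<Rightarrow> bool" where
  "peval v (Eq s t) = v (Eq s t)"
| "peval v (Less s t) = v (Less s t)"
| "peval v (Greater s t) = v (Greater s t)"
| "peval v (Neg a) = (\<not> peval v a)"
| "peval v (Conj a b) = (peval v a \<and> peval v b)"
| "peval v (Disj a b) = (peval v a \<or> peval v b)"
| "peval v (Imp a b) = (peval v a \<longrightarrow> peval v b)"
| "peval v (Iff a b) = (peval v a \<longleftrightarrow> peval v b)"
| "peval v (All x a) = v (All x a)"
| "peval v (Ex x a) = v (Ex x a)"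

definition tautology :: "fm \<Rightarrow> bool" where
  "tautology a \<longleftrightarrow> (\<forall>v. peval v a)"

text \<open>Non-logical axioms (free variables are implicitly generalised by Gen).
 Variables: x = 0, y = 1, z = 2.\<close>
inductive PA_axiom :: "fm \<Rightarrow> bool" where
  succ_ne_zero: "PA_axiom (Neg (Eq (Succ (Var 0)) Zero))"
| succ_inj: "PA_axiom (Imp (Eq (Succ (Var 0)) (Succ (Var 1))) (Eq (Var 0) (Var 1)))"
| plus_zero: "PA_axiom (Eq (Plus (Var 0) Zero) (Var 0))"
| plus_succ: "PA_axiom (Eq (Plus (Var 0) (Succ (Var 1))) (Succ (Plus (Var 0) (Var 1))))"
| times_zero: "PA_axiom (Eq (Times (Var 0) Zero) Zero)"
| times_succ: "PA_axiom (Eq (Times (Var 0) (Succ (Var 1))) (Plus (Times (Var 0) (Var 1)) (Var 0)))"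
| less_def: "PA_axiom (Iff (Less (Var 0) (Var 1))
                (Ex 2 (Eq (Plus (Var 0) (Succ (Var 2))) (Var 1))))"
| greater_def: "PA_axiom (Iff (Greater (Var 0) (Var 1)) (Less (Var 1) (Var 0)))"
| induction: "PA_axiom (Imp (Conj (subst x Zero a)
                              (All x (Imp a (subst x (Succ (Var x)) a))))
                        (All x a))"

text \<open>Hilbert-style first-order calculus (Enderton) with rules MP and Gen.\<close>
inductive PA_prv :: "fm \<Rightarrow> bool" where
  ax_PA: "PA_axiom a \<Longrightarrow> PA_prv a"
| ax_taut: "tautology a \<Longrightarrow> PA_prv a"
| ax_inst: "substitutable x u a \<Longrightarrow> PA_prv (Imp (All x a) (subst x u a))"
| ax_vac: "x \<notin> fv a \<Longrightarrow> PA_prv (Imp a (All x a))"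
| ax_dist: "PA_prv (Imp (All x (Imp a b)) (Imp (All x a) (All x b)))"
| ax_ex: "PA_prv (Iff (Ex x a) (Neg (All x (Neg a))))"
| ax_refl: "PA_prv (Eq u u)"
| ax_eqsub: "substitutable x s a \<Longrightarrow> substitutable x t a \<Longrightarrow>
             PA_prv (Imp (Eq s t) (Imp (subst x s a) (subst x t a)))"
| mp: "PA_prv (Imp a b) \<Longrightarrow> PA_prv a \<Longrightarrow> PA_prv b"
| gen: "PA_prv a \<Longrightarrow> PA_prv (All x a)"

primrec code_tm :: "tm \<Rightarrow> nat" where
  "code_tm Zero = prod_encode (0, 0)"
| "code_tm (Var i) = prod_encode (1, i)"
| "code_tm (Succ t) = prod_encode (2, code_tm t)"
| "code_tm (Plus s t) = prod_encode (3, prod_encode (code_tm s, code_tm t))"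
| "code_tm (Times s t) = prod_encode (4, prod_encode (code_tm s, code_tm t))"

primrec gn :: "fm \<Rightarrow> nat" where
  "gn (Eq s t) = prod_encode (0, prod_encode (code_tm s, code_tm t))"
| "gn (Less s t) = prod_encode (1, prod_encode (code_tm s, code_tm t))"
| "gn (Greater s t) = prod_encode (2, prod_encode (code_tm s, code_tm t))"
| "gn (Neg a) = prod_encode (3, gn a)"
| "gn (Conj a b) = prod_encode (4, prod_encode (gn a, gn b))"
| "gn (Disj a b) = prod_encode (5, prod_encode (gn a, gn b))"
| "gn (Imp a b) = prod_encode (6, prod_encode (gn a, gn b))"
| "gn (Iff a b) = prod_encode (7, prod_encode (gn a, gn b))"
| "gn (All x a) = prod_encode (8, prod_encode (x, gn a))"
| "gn (Ex x a) = prod_encode (9, prod_encode (x, gn a))"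

end

theory Submission
  imports Defs "HOL-Number_Theory.Cong"
begin

text \<open>Apply the diagonal lemma to \<open>\<chi>(y) = \<not> \<phi>(h(y))\<close>, where \<open>h(m)\<close> is the code of
  \<open>\<sigma>\<^sub>m = \<exists>x (x = m \<and> \<phi>)\<close>. Since PA proves \<open>\<sigma>\<^sub>m \<longleftrightarrow> \<phi>(m)\<close>, the fixed point
  \<open>\<tau> \<longleftrightarrow> \<not> \<phi>(h(\<lceil>\<tau>\<rceil>))\<close> and \<open>\<sigma> = \<sigma>\<^bsub>\<lceil>\<tau>\<rceil>\<^esub>\<close> form the required pair. The diagonal lemma
  itself uses the same construction for the diagonal function \<open>d(n) = \<lceil>\<exists>v (v = n \<and> A)\<rceil>\<close>
  with \<open>\<lceil>A\<rceil> = n\<close>.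

  Both \<open>h\<close> and \<open>d\<close> are strongly representable: coding the numeral \<open>n\<close> by a Goedel
  \<open>\<beta>\<close>-sequence gives their graphs bounded definitions, PA decides every bounded sentence,
  and asking for the least witness makes the defining formula provably functional.\<close>

section \<open>Standard semantics and substitution\<close>

primrec val :: "(nat \<Rightarrow> nat) \<Rightarrow> tm \<Rightarrow> nat" where
  "val e Zero = 0"
| "val e (Var i) = e i"
| "val e (Succ t) = Suc (val e t)"
| "val e (Plus s t) = val e s + val e t"
| "val e (Times s t) = val e s * val e t"

primrec holds :: "(nat \<Rightarrow> nat) \<Rightarrow> fm \<Rightarrow> bool" where
  "holds e (Eq s t) = (val e s = val e t)"
| "holds e (Less s t) = (val e s < val e t)"
| "holds e (Greater s t) = (val e s > val e t)"
| "holds e (Neg a) = (\<not> holds e a)"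
| "holds e (Conj a b) = (holds e a \<and> holds e b)"
| "holds e (Disj a b) = (holds e a \<or> holds e b)"
| "holds e (Imp a b) = (holds e a \<longrightarrow> holds e b)"
| "holds e (Iff a b) = (holds e a \<longleftrightarrow> holds e b)"
| "holds e (All x a) = (\<forall>k. holds (e(x:=k)) a)"
| "holds e (Ex x a) = (\<exists>k. holds (e(x:=k)) a)"

primrec vars_fm :: "fm \<Rightarrow> nat set" where
  "vars_fm (Eq s t) = vars_tm s \<union> vars_tm t"
| "vars_fm (Less s t) = vars_tm s \<union> vars_tm t"
| "vars_fm (Greater s t) = vars_tm s \<union> vars_tm t"
| "vars_fm (Neg a) = vars_fm a"
| "vars_fm (Conj a b) = vars_fm a \<union> vars_fm b"
| "vars_fm (Disj a b) = vars_fm a \<union> vars_fm b"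
| "vars_fm (Imp a b) = vars_fm a \<union> vars_fm b"
| "vars_fm (Iff a b) = vars_fm a \<union> vars_fm b"
| "vars_fm (All x a) = insert x (vars_fm a)"
| "vars_fm (Ex x a) = insert x (vars_fm a)"

lemma finite_vars_tm [simp]: "finite (vars_tm t)"
  by (induct t) auto

lemma finite_vars_fm [simp]: "finite (vars_fm a)"
  by (induct a) auto

lemma fv_subset_vars_fm: "fv a \<subseteq> vars_fm a"
  by (induct a) auto

lemma finite_fv [simp]: "finite (fv a)"
  using fv_subset_vars_fm finite_vars_fm finite_subset by blast

lemma vars_num [simp]: "vars_tm (num n) = {}"
  by (induct n) auto

lemma val_num [simp]: "val e (num n) = n"
  by (induct n) auto

lemma val_cong: "(\<forall>v\<in>vars_tm t. e v = e' v) \<Longrightarrow> val e t = val e' t"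
  by (induct t) auto

lemma val_upd [simp]: "x \<notin> vars_tm t \<Longrightarrow> val (e(x:=k)) t = val e t"
  by (rule val_cong) auto

lemma val_subst_tm: "val e (subst_tm x u t) = val (e(x := val e u)) t"
  by (induct t) auto

lemma holds_subst:
  assumes "vars_tm u = {}"
  shows "holds e (subst x u a) = holds (e(x := val e u)) a"
proof (induct a arbitrary: e)
  case (All y a)
  have "(e(y:=k))(x := val (e(y:=k)) u) = (e(x := val e u))(y:=k)" if "y \<noteq> x" for k
    using assms that by (auto intro: val_cong)
  with All show ?case by (cases "y = x") (simp_all del: fun_upd_apply)
next
  case (Ex y a)
  have "(e(y:=k))(x := val (e(y:=k)) u) = (e(x := val e u))(y:=k)" if "y \<noteq> x" for k
    using assms that by (auto intro: val_cong)
  with Ex show ?case by (cases "y = x") (simp_all del: fun_upd_apply)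
qed (simp_all add: val_subst_tm)

lemma subst_tm_triv [simp]: "x \<notin> vars_tm t \<Longrightarrow> subst_tm x u t = t"
  by (induct t) auto

lemma subst_triv: "x \<notin> fv a \<Longrightarrow> subst x u a = a"
  by (induct a) auto

lemma subst_tm_Var_same [simp]: "subst_tm x (Var x) t = t"
  by (induct t) auto

lemma subst_Var_same [simp]: "subst x (Var x) a = a"
  by (induct a) auto

lemma substitutable_Var_same [simp]: "substitutable x (Var x) a"
  by (induct a) auto

lemma substitutable_closed [simp]: "vars_tm u = {} \<Longrightarrow> substitutable x u a"
  by (induct a) auto

lemma vars_subst_tm: "vars_tm (subst_tm x u t) \<subseteq> (vars_tm t - {x}) \<union> vars_tm u"
  by (induct t) auto

lemma vars_subst_tm_closed [simp]: "vars_tm u = {} \<Longrightarrow> vars_tm (subst_tm x u t) = vars_tm t - {x}"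
  by (induct t) auto

lemma fv_subst: "fv (subst x u a) \<subseteq> (fv a - {x}) \<union> vars_tm u"
  by (induct a) (auto dest: subsetD[OF vars_subst_tm])

lemma fv_subst_closed [simp]: "vars_tm u = {} \<Longrightarrow> fv (subst x u a) = fv a - {x}"
  by (induct a) auto

lemma size_subst [simp]: "size (subst x u a) = size a"
  by (induct a) auto

lemma subst_tm_rename: "z \<notin> vars_tm t \<Longrightarrow> subst_tm z u (subst_tm x (Var z) t) = subst_tm x u t"
  by (induct t) auto

lemma subst_rename: "z \<notin> vars_fm a \<Longrightarrow> subst z u (subst x (Var z) a) = subst x u a"
  by (induct a) (auto simp: subst_tm_rename intro!: subst_triv dest: subsetD[OF fv_subset_vars_fm])

lemma subst_tm_commute:
  "x \<noteq> y \<Longrightarrow> vars_tm u = {} \<Longrightarrow> vars_tm v = {} \<Longrightarrow>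
   subst_tm x u (subst_tm y v t) = subst_tm y v (subst_tm x u t)"
  by (induct t) auto

lemma subst_commute:
  "x \<noteq> y \<Longrightarrow> vars_tm u = {} \<Longrightarrow> vars_tm v = {} \<Longrightarrow>
   subst x u (subst y v a) = subst y v (subst x u a)"
  by (induct a) (auto simp: subst_tm_commute)

lemma ex_fresh_var: "finite (S :: nat set) \<Longrightarrow> \<exists>x. x \<notin> S"
  using infinite_UNIV_nat ex_new_if_finite by blast


section \<open>Derived rules of the calculus\<close>

lemma prv_taut_mp1: "PA_prv a \<Longrightarrow> tautology (Imp a c) \<Longrightarrow> PA_prv c"
  using mp ax_taut by blast

lemma prv_taut_mp2: "PA_prv a \<Longrightarrow> PA_prv b \<Longrightarrow> tautology (Imp a (Imp b c)) \<Longrightarrow> PA_prv c"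
  using mp ax_taut by blast

lemma prv_taut_mp3:
  "PA_prv a \<Longrightarrow> PA_prv b \<Longrightarrow> PA_prv c \<Longrightarrow> tautology (Imp a (Imp b (Imp c d))) \<Longrightarrow> PA_prv d"
  using mp ax_taut by blast

lemma prv_taut_mp4:
  "PA_prv a \<Longrightarrow> PA_prv b \<Longrightarrow> PA_prv c \<Longrightarrow> PA_prv d \<Longrightarrow>
   tautology (Imp a (Imp b (Imp c (Imp d f)))) \<Longrightarrow> PA_prv f"
  using mp ax_taut by blast

lemma prv_imp_trans: "PA_prv (Imp a b) \<Longrightarrow> PA_prv (Imp b c) \<Longrightarrow> PA_prv (Imp a c)"
  by (rule prv_taut_mp2[of "Imp a b" "Imp b c"]) (auto simp: tautology_def)

lemma prv_Iff_trans: "PA_prv (Iff a b) \<Longrightarrow> PA_prv (Iff b c) \<Longrightarrow> PA_prv (Iff a c)"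
  by (rule prv_taut_mp2[of "Iff a b" "Iff b c"]) (auto simp: tautology_def)

lemma prv_weaken: "PA_prv a \<Longrightarrow> PA_prv (Imp h a)"
  by (rule prv_taut_mp1[of a]) (auto simp: tautology_def)

lemma prv_imp_mp: "PA_prv (Imp h (Imp a b)) \<Longrightarrow> PA_prv (Imp h a) \<Longrightarrow> PA_prv (Imp h b)"
  by (rule prv_taut_mp2[of "Imp h (Imp a b)" "Imp h a"]) (auto simp: tautology_def)

lemma prv_imp_refl: "PA_prv (Imp h h)"
  by (rule ax_taut) (auto simp: tautology_def)

lemma prv_curry: "PA_prv (Imp (Conj h a) b) \<Longrightarrow> PA_prv (Imp h (Imp a b))"
  by (rule prv_taut_mp1[of "Imp (Conj h a) b"]) (auto simp: tautology_def)

lemma prv_conj_fst: "PA_prv (Imp (Conj h a) h)"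
  by (rule ax_taut) (auto simp: tautology_def)

lemma prv_conj_snd: "PA_prv (Imp (Conj h a) a)"
  by (rule ax_taut) (auto simp: tautology_def)

lemma prv_neg_imp: "PA_prv (Neg a) \<Longrightarrow> PA_prv (Imp a b)"
  by (rule prv_taut_mp1[of "Neg a"]) (auto simp: tautology_def)

lemma prv_inst: "PA_prv a \<Longrightarrow> substitutable x u a \<Longrightarrow> PA_prv (subst x u a)"
  using mp[OF ax_inst gen] by blast

lemma prv_inst3:
  "PA_prv a \<Longrightarrow> substitutable x u a \<Longrightarrow> substitutable y v (subst x u a) \<Longrightarrow>
   substitutable z w (subst y v (subst x u a)) \<Longrightarrow> PA_prv (subst z w (subst y v (subst x u a)))"
  by (blast intro: prv_inst)

lemma prv_all_intro:
  assumes "PA_prv (Imp a b)" "x \<notin> fv a"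
  shows "PA_prv (Imp a (All x b))"
proof -
  have "PA_prv (Imp (All x a) (All x b))"
    using mp[OF ax_dist gen[OF assms(1)]] .
  then show ?thesis using prv_imp_trans ax_vac[OF assms(2)] by blast
qed

lemma prv_ex_elim:
  assumes "PA_prv (Imp a b)" "x \<notin> fv b"
  shows "PA_prv (Imp (Ex x a) b)"
proof -
  have "PA_prv (Imp (Neg b) (Neg a))"
    using assms(1) by (rule prv_taut_mp1) (auto simp: tautology_def)
  then have "PA_prv (Imp (Neg b) (All x (Neg a)))"
    using prv_all_intro assms(2) by simp
  with ax_ex[of x a] show ?thesis
    by (rule prv_taut_mp2) (auto simp: tautology_def)
qed

lemma prv_ex_intro:
  assumes "substitutable x u a"
  shows "PA_prv (Imp (subst x u a) (Ex x a))"
proof -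
  have "PA_prv (Imp (All x (Neg a)) (Neg (subst x u a)))"
    using ax_inst[of x u "Neg a"] assms by simp
  with ax_ex[of x a] show ?thesis by (rule prv_taut_mp2) (auto simp: tautology_def)
qed

text \<open>The suffix \<open>_under\<close> marks rules relativised to a hypothesis \<open>h\<close>, i.e. acting on
  provable implications \<open>Imp h _\<close>.\<close>

lemma prv_ex_intro_under:
  "substitutable x u a \<Longrightarrow> PA_prv (Imp h (subst x u a)) \<Longrightarrow> PA_prv (Imp h (Ex x a))"
  using prv_ex_intro prv_imp_trans by blast

lemma prv_all_elim: "PA_prv (All x a) \<Longrightarrow> substitutable x u a \<Longrightarrow> PA_prv (subst x u a)"
  using mp ax_inst by blast


section \<open>Equality\<close>

lemma prv_eq_sym_imp: "PA_prv (Imp (Eq s t) (Eq t s))"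
proof -
  obtain x where x: "x \<notin> vars_tm s" using ex_fresh_var finite_vars_tm by blast
  have "PA_prv (Imp (Eq s t) (Imp (subst x s (Eq (Var x) s)) (subst x t (Eq (Var x) s))))"
    by (rule ax_eqsub) simp_all
  then have "PA_prv (Imp (Eq s t) (Imp (Eq s s) (Eq t s)))" using x by simp
  with ax_refl[of s] show ?thesis by (rule prv_taut_mp2) (auto simp: tautology_def)
qed

lemma prv_eq_trans_imp: "PA_prv (Imp (Eq s t) (Imp (Eq t r) (Eq s r)))"
proof -
  obtain x where x: "x \<notin> vars_tm s" using ex_fresh_var finite_vars_tm by blast
  have "PA_prv (Imp (Eq t r) (Imp (subst x t (Eq s (Var x))) (subst x r (Eq s (Var x)))))"
    by (rule ax_eqsub) simp_all
  then have "PA_prv (Imp (Eq t r) (Imp (Eq s t) (Eq s r)))" using x by simp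
  then show ?thesis by (rule prv_taut_mp1) (auto simp: tautology_def)
qed

lemma prv_eq_sym_under: "PA_prv (Imp h (Eq s t)) \<Longrightarrow> PA_prv (Imp h (Eq t s))"
  using prv_imp_trans prv_eq_sym_imp by blast

lemma prv_eq_trans_under:
  "PA_prv (Imp h (Eq s t)) \<Longrightarrow> PA_prv (Imp h (Eq t r)) \<Longrightarrow> PA_prv (Imp h (Eq s r))"
  using prv_imp_mp[OF prv_imp_mp[OF prv_weaken[OF prv_eq_trans_imp]]] by blast

lemma prv_eq_sym: "PA_prv (Eq s t) \<Longrightarrow> PA_prv (Eq t s)"
  using mp prv_eq_sym_imp by blast

lemma prv_eq_trans: "PA_prv (Eq s t) \<Longrightarrow> PA_prv (Eq t r) \<Longrightarrow> PA_prv (Eq s r)"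
  using mp prv_eq_trans_imp by blast

lemma prv_eq_subst_under:
  "PA_prv (Imp h (Eq s t)) \<Longrightarrow> PA_prv (Imp h (subst x s a)) \<Longrightarrow>
   substitutable x s a \<Longrightarrow> substitutable x t a \<Longrightarrow> PA_prv (Imp h (subst x t a))"
  using prv_imp_mp[OF prv_imp_mp[OF prv_weaken[OF ax_eqsub]]] by blast

lemma prv_eq_num_subst:
  assumes "PA_prv (subst x (num n) a)"
  shows "PA_prv (Imp (Eq (Var x) (num n)) a)"
proof -
  have "PA_prv (Imp (Eq (Var x) (num n)) (subst x (Var x) a))"
    by (rule prv_eq_subst_under[OF prv_eq_sym_imp prv_weaken[OF assms]]) simp_all
  then show ?thesis by simp
qed

lemma prv_tm_cong_under:
  assumes "PA_prv (Imp h (Eq s t))" "x \<notin> vars_tm s"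
  shows "PA_prv (Imp h (Eq (subst_tm x s c) (subst_tm x t c)))"
proof -
  have x: "x \<notin> vars_tm (subst_tm x s c)" using vars_subst_tm[of x s c] assms(2) by auto
  have "PA_prv (Imp (Eq s t) (Imp (subst x s (Eq (subst_tm x s c) c)) (subst x t (Eq (subst_tm x s c) c))))"
    by (rule ax_eqsub) simp_all
  then have "PA_prv (Imp (Eq s t) (Imp (Eq (subst_tm x s c) (subst_tm x s c))
                                        (Eq (subst_tm x s c) (subst_tm x t c))))"
    using x by simp
  with ax_refl have "PA_prv (Imp (Eq s t) (Eq (subst_tm x s c) (subst_tm x t c)))"
    by (rule prv_taut_mp2) (auto simp: tautology_def)
  with assms(1) show ?thesis by (rule prv_imp_trans)
qed

lemma prv_Succ_cong_under:
  assumes "PA_prv (Imp h (Eq s t))"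
  shows "PA_prv (Imp h (Eq (Succ s) (Succ t)))"
proof -
  obtain x where "x \<notin> vars_tm s" using ex_fresh_var finite_vars_tm by blast
  then show ?thesis using prv_tm_cong_under[OF assms, of x "Succ (Var x)"] by simp
qed

lemma prv_Plus_cong_under:
  assumes "PA_prv (Imp h (Eq s t))" "PA_prv (Imp h (Eq s' t'))"
  shows "PA_prv (Imp h (Eq (Plus s s') (Plus t t')))"
proof -
  obtain x where x: "x \<notin> vars_tm s \<union> vars_tm s' \<union> vars_tm t"
    using ex_fresh_var finite_vars_tm finite_UnI by metis
  have "PA_prv (Imp h (Eq (Plus s s') (Plus t s')))"
    using prv_tm_cong_under[OF assms(1), of x "Plus (Var x) s'"] x by simp
  moreover have "PA_prv (Imp h (Eq (Plus t s') (Plus t t')))"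
    using prv_tm_cong_under[OF assms(2), of x "Plus t (Var x)"] x by simp
  ultimately show ?thesis by (rule prv_eq_trans_under)
qed

lemma prv_Times_cong_under:
  assumes "PA_prv (Imp h (Eq s t))" "PA_prv (Imp h (Eq s' t'))"
  shows "PA_prv (Imp h (Eq (Times s s') (Times t t')))"
proof -
  obtain x where x: "x \<notin> vars_tm s \<union> vars_tm s' \<union> vars_tm t"
    using ex_fresh_var finite_vars_tm finite_UnI by metis
  have "PA_prv (Imp h (Eq (Times s s') (Times t s')))"
    using prv_tm_cong_under[OF assms(1), of x "Times (Var x) s'"] x by simp
  moreover have "PA_prv (Imp h (Eq (Times t s') (Times t t')))"
    using prv_tm_cong_under[OF assms(2), of x "Times t (Var x)"] x by simp
  ultimately show ?thesis by (rule prv_eq_trans_under)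
qed

lemma prv_discharge_refl: "PA_prv (Imp (Eq Zero Zero) a) \<Longrightarrow> PA_prv a"
  using mp ax_refl by blast

lemma prv_Succ_cong: "PA_prv (Eq s t) \<Longrightarrow> PA_prv (Eq (Succ s) (Succ t))"
  by (rule prv_discharge_refl, rule prv_Succ_cong_under, rule prv_weaken)

lemma prv_Plus_cong: "PA_prv (Eq s t) \<Longrightarrow> PA_prv (Eq s' t') \<Longrightarrow> PA_prv (Eq (Plus s s') (Plus t t'))"
  by (rule prv_discharge_refl, rule prv_Plus_cong_under; rule prv_weaken)

lemma prv_Times_cong: "PA_prv (Eq s t) \<Longrightarrow> PA_prv (Eq s' t') \<Longrightarrow> PA_prv (Eq (Times s s') (Times t t'))"
  by (rule prv_discharge_refl, rule prv_Times_cong_under; rule prv_weaken)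


section \<open>Arithmetic of numerals\<close>

lemma prv_Succ_ne_Zero: "PA_prv (Neg (Eq (Succ t) Zero))"
  using prv_inst[OF ax_PA[OF PA_axiom.succ_ne_zero], of 0 t] by simp

lemma prv_Plus_Zero: "PA_prv (Eq (Plus t Zero) t)"
  using prv_inst[OF ax_PA[OF PA_axiom.plus_zero], of 0 t] by simp

lemma prv_Times_Zero: "PA_prv (Eq (Times t Zero) Zero)"
  using prv_inst[OF ax_PA[OF PA_axiom.times_zero], of 0 t] by simp

text \<open>The axioms in two variables are instantiated through a fresh variable \<open>k\<close>, since
  \<open>subst\<close> substitutes one variable at a time.\<close>

lemma prv_Plus_Succ: "PA_prv (Eq (Plus s (Succ t)) (Succ (Plus s t)))"
proof -
  have "finite (vars_tm s \<union> {0, 1})" by simp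
  then obtain k where "k \<notin> vars_tm s \<union> {0, 1}" using ex_fresh_var by blast
  then show ?thesis using prv_inst3[OF ax_PA[OF PA_axiom.plus_succ], of 1 "Var k" 0 s k t] by simp
qed

lemma prv_Times_Succ: "PA_prv (Eq (Times s (Succ t)) (Plus (Times s t) s))"
proof -
  have "finite (vars_tm s \<union> {0, 1})" by simp
  then obtain k where "k \<notin> vars_tm s \<union> {0, 1}" using ex_fresh_var by blast
  then show ?thesis using prv_inst3[OF ax_PA[OF PA_axiom.times_succ], of 1 "Var k" 0 s k t] by simp
qed

lemma prv_Succ_inj: "PA_prv (Imp (Eq (Succ s) (Succ t)) (Eq s t))"
proof -
  have "finite (vars_tm s \<union> {0, 1})" by simp
  then obtain k where "k \<notin> vars_tm s \<union> {0, 1}" using ex_fresh_var by blast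
  then show ?thesis using prv_inst3[OF ax_PA[OF PA_axiom.succ_inj], of 1 "Var k" 0 s k t] by simp
qed

lemma prv_num_Plus: "PA_prv (Eq (Plus (num m) (num n)) (num (m + n)))"
proof (induct n)
  case 0
  then show ?case using prv_Plus_Zero by simp
next
  case (Suc n)
  then show ?case using prv_eq_trans[OF prv_Plus_Succ prv_Succ_cong] by simp
qed

lemma prv_num_Times: "PA_prv (Eq (Times (num m) (num n)) (num (m * n)))"
proof (induct n)
  case 0
  then show ?case using prv_Times_Zero by simp
next
  case (Suc n)
  have "PA_prv (Eq (Plus (Times (num m) (num n)) (num m)) (num (m * n + m)))"
    using prv_eq_trans[OF prv_Plus_cong[OF Suc ax_refl] prv_num_Plus] .
  then show ?case using prv_eq_trans[OF prv_Times_Succ] by (simp add: add.commute)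
qed

lemma prv_eq_num_val: "vars_tm t = {} \<Longrightarrow> PA_prv (Eq t (num (val e t)))"
proof (induct t)
  case Zero
  then show ?case using ax_refl by simp
next
  case (Succ t)
  then show ?case using prv_Succ_cong by simp
next
  case (Plus s t)
  then show ?case using prv_eq_trans[OF prv_Plus_cong prv_num_Plus] by simp
next
  case (Times s t)
  then show ?case using prv_eq_trans[OF prv_Times_cong prv_num_Times] by simp
qed simp

lemma prv_num_neq: "m \<noteq> n \<Longrightarrow> PA_prv (Neg (Eq (num m) (num n)))"
proof (induct m arbitrary: n)
  case 0
  then obtain n' where n: "n = Suc n'" by (cases n) auto
  from prv_eq_sym_imp[of Zero "Succ (num n')"] prv_Succ_ne_Zero[of "num n'"]
  have "PA_prv (Neg (Eq Zero (Succ (num n'))))"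
    by (rule prv_taut_mp2) (auto simp: tautology_def)
  then show ?case using n by simp
next
  case (Suc m)
  show ?case
  proof (cases n)
    case 0
    then show ?thesis using prv_Succ_ne_Zero by simp
  next
    case (Suc n')
    with Suc.hyps Suc.prems have "PA_prv (Neg (Eq (num m) (num n')))" by simp
    with prv_Succ_inj[of "num m" "num n'"] have "PA_prv (Neg (Eq (Succ (num m)) (Succ (num n'))))"
      by (rule prv_taut_mp2) (auto simp: tautology_def)
    then show ?thesis using Suc by simp
  qed
qed

lemma prv_induct:
  assumes "PA_prv (subst z Zero a)" "PA_prv (Imp a (subst z (Succ (Var z)) a))"
  shows "PA_prv a"
proof -
  have "PA_prv (Conj (subst z Zero a) (All z (Imp a (subst z (Succ (Var z)) a))))"
    using assms(1) gen[OF assms(2)] by (rule prv_taut_mp2) (auto simp: tautology_def)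
  then have "PA_prv (All z a)" by (rule mp[OF ax_PA[OF PA_axiom.induction]])
  then show ?thesis using prv_all_elim[of z a "Var z"] by simp
qed

lemma prv_Zero_or_Succ:
  assumes "y \<noteq> z"
  shows "PA_prv (Disj (Eq (Var z) Zero) (Ex y (Eq (Var z) (Succ (Var y)))))"
proof (rule prv_induct[where z = z])
  show "PA_prv (subst z Zero (Disj (Eq (Var z) Zero) (Ex y (Eq (Var z) (Succ (Var y))))))"
    using ax_refl[of Zero] by (rule prv_taut_mp1) (auto simp: tautology_def assms)
  have "PA_prv (Imp (subst y (Var z) (Eq (Succ (Var z)) (Succ (Var y))))
                    (Ex y (Eq (Succ (Var z)) (Succ (Var y)))))"
    by (rule prv_ex_intro) simp
  then have "PA_prv (Ex y (Eq (Succ (Var z)) (Succ (Var y))))" using assms ax_refl mp by simp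
  then show "PA_prv (Imp (Disj (Eq (Var z) Zero) (Ex y (Eq (Var z) (Succ (Var y)))))
     (subst z (Succ (Var z)) (Disj (Eq (Var z) Zero) (Ex y (Eq (Var z) (Succ (Var y)))))))"
    by (rule prv_taut_mp1) (auto simp: tautology_def assms)
qed

lemma prv_cases_Zero_Succ:
  assumes "y \<noteq> z" "y \<notin> fv b"
    and "PA_prv (Imp (Eq (Var z) Zero) b)" "PA_prv (Imp (Eq (Var z) (Succ (Var y))) b)"
  shows "PA_prv b"
  using prv_Zero_or_Succ[OF assms(1)] assms(3) prv_ex_elim[OF assms(4,2)]
  by (rule prv_taut_mp3) (auto simp: tautology_def)

lemma prv_Zero_Plus: "PA_prv (Eq (Plus Zero t) t)"
proof -
  let ?a = "Eq (Plus Zero (Var 0)) (Var 0)"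
  have "PA_prv ?a"
  proof (rule prv_induct[where z = 0])
    show "PA_prv (subst 0 Zero ?a)" using prv_Plus_Zero by simp
    have "PA_prv (Imp ?a (Eq (Plus Zero (Succ (Var 0))) (Succ (Var 0))))"
      using prv_eq_trans_under[OF prv_weaken[OF prv_Plus_Succ] prv_Succ_cong_under[OF prv_imp_refl]] .
    then show "PA_prv (Imp ?a (subst 0 (Succ (Var 0)) ?a))" by simp
  qed
  then show ?thesis using prv_inst[of ?a 0 t] by simp
qed

lemma prv_Succ_Plus: "PA_prv (Eq (Plus (Succ s) t) (Succ (Plus s t)))"
proof -
  obtain z where z: "z \<notin> vars_tm s" using ex_fresh_var finite_vars_tm by blast
  let ?a = "Eq (Plus (Succ s) (Var z)) (Succ (Plus s (Var z)))"
  have "PA_prv ?a"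
  proof (rule prv_induct[where z = z])
    show "PA_prv (subst z Zero ?a)"
      using z prv_eq_trans[OF prv_Plus_Zero prv_eq_sym[OF prv_Succ_cong[OF prv_Plus_Zero]]] by simp
    have "PA_prv (Imp ?a (Eq (Plus (Succ s) (Succ (Var z))) (Succ (Succ (Plus s (Var z))))))"
      using prv_eq_trans_under[OF prv_weaken[OF prv_Plus_Succ] prv_Succ_cong_under[OF prv_imp_refl]] .
    then show "PA_prv (Imp ?a (subst z (Succ (Var z)) ?a))"
      using z prv_eq_trans_under[OF _ prv_weaken[OF prv_eq_sym[OF prv_Succ_cong[OF prv_Plus_Succ]]]]
      by simp
  qed
  then show ?thesis using z prv_inst[of ?a z t] by simp
qed


section \<open>The order relation\<close>

text \<open>The order is expressed by its defining formula rather than by the primitive \<open>Less\<close>,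
  which would need the axiom \<open>less_def\<close> at every use; \<open>k\<close> is the bound witness variable.\<close>

abbreviation Lt :: "nat \<Rightarrow> tm \<Rightarrow> tm \<Rightarrow> fm" where
  "Lt k s t \<equiv> Ex k (Eq (Plus s (Succ (Var k))) t)"

lemma holds_Lt:
  "k \<notin> vars_tm s \<Longrightarrow> k \<notin> vars_tm t \<Longrightarrow> holds e (Lt k s t) = (val e s < val e t)"
  by (simp add: less_iff_Suc_add) (metis add_Suc_right)

definition Falsity :: fm where
  "Falsity = Neg (Eq Zero Zero)"

lemma fv_Falsity [simp]: "fv Falsity = {}"
  by (simp add: Falsity_def)

lemma prv_Neg_of_imp_Falsity: "PA_prv (Imp a Falsity) \<Longrightarrow> PA_prv (Neg a)"
  using ax_refl[of Zero] by (rule prv_taut_mp2[rotated]) (auto simp: tautology_def Falsity_def)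

lemma prv_imp_Falsity_of_Neg: "PA_prv (Neg a) \<Longrightarrow> PA_prv (Imp a Falsity)"
  by (rule prv_taut_mp1[of "Neg a"]) (auto simp: tautology_def Falsity_def)

lemma prv_Plus_eq_num_cases_step:
  assumes z: "z \<notin> vars_tm t" "z \<notin> fv b"
    and zero: "PA_prv (Imp (Eq t (num n)) b)"
    and succ: "\<And>y. y \<notin> vars_tm t \<Longrightarrow> y \<notin> fv b \<Longrightarrow>
                 PA_prv (Imp (Eq (Succ (Plus t (Var y))) (num n)) b)"
  shows "PA_prv (Imp (Eq (Plus t (Var z)) (num n)) b)"
proof -
  have "finite (vars_tm t \<union> fv b \<union> {z})" by simp
  from ex_fresh_var[OF this] obtain y where y: "y \<notin> vars_tm t \<union> fv b \<union> {z}" ..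
  let ?e = "Eq (Plus t (Var z)) (num n)"
  show ?thesis
  proof (rule prv_cases_Zero_Succ[of y z])
    show "y \<noteq> z" "y \<notin> fv (Imp ?e b)" using y by auto
    let ?h = "Conj (Eq (Var z) Zero) ?e"
    have "PA_prv (Imp ?h (Eq (Plus t (Var z)) (Plus t Zero)))"
      using prv_weaken[OF ax_refl] prv_conj_fst by (rule prv_Plus_cong_under)
    then have "PA_prv (Imp ?h (Eq (Plus t (Var z)) t))"
      using prv_weaken[OF prv_Plus_Zero] by (rule prv_eq_trans_under)
    then have "PA_prv (Imp ?h (Eq t (num n)))"
      by (rule prv_eq_trans_under[OF prv_eq_sym_under prv_conj_snd])
    then show "PA_prv (Imp (Eq (Var z) Zero) (Imp ?e b))"
      by (rule prv_curry[OF prv_imp_trans[OF _ zero]])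
  next
    let ?h = "Conj (Eq (Var z) (Succ (Var y))) ?e"
    have "PA_prv (Imp ?h (Eq (Plus t (Var z)) (Plus t (Succ (Var y)))))"
      using prv_weaken[OF ax_refl] prv_conj_fst by (rule prv_Plus_cong_under)
    then have "PA_prv (Imp ?h (Eq (Plus t (Var z)) (Succ (Plus t (Var y)))))"
      using prv_weaken[OF prv_Plus_Succ] by (rule prv_eq_trans_under)
    then have "PA_prv (Imp ?h (Eq (Succ (Plus t (Var y))) (num n)))"
      by (rule prv_eq_trans_under[OF prv_eq_sym_under prv_conj_snd])
    moreover have "PA_prv (Imp (Eq (Succ (Plus t (Var y))) (num n)) b)"
      using y by (intro succ) auto
    ultimately show "PA_prv (Imp (Eq (Var z) (Succ (Var y))) (Imp ?e b))"
      by (rule prv_curry[OF prv_imp_trans])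
  qed
qed

lemma prv_Plus_eq_num_cases:
  "z \<notin> vars_tm t \<Longrightarrow> z \<notin> fv b \<Longrightarrow> (\<And>j. j \<le> n \<Longrightarrow> PA_prv (Imp (Eq t (num j)) b)) \<Longrightarrow>
   PA_prv (Imp (Eq (Plus t (Var z)) (num n)) b)"
proof (induct n arbitrary: z)
  case 0
  show ?case
  proof (rule prv_Plus_eq_num_cases_step)
    show "PA_prv (Imp (Eq t (num 0)) b)" using 0 by simp
    show "PA_prv (Imp (Eq (Succ (Plus t (Var y))) (num 0)) b)" for y
      using prv_neg_imp[OF prv_Succ_ne_Zero] by simp
  qed (fact 0)+
next
  case (Suc n)
  show ?case
  proof (rule prv_Plus_eq_num_cases_step)
    show "PA_prv (Imp (Eq t (num (Suc n))) b)" using Suc.prems(3)[of "Suc n"] by simp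
    show "PA_prv (Imp (Eq (Succ (Plus t (Var y))) (num (Suc n))) b)"
      if "y \<notin> vars_tm t" "y \<notin> fv b" for y
    proof -
      have "PA_prv (Imp (Eq (Plus t (Var y)) (num n)) b)"
        using that Suc.prems(3) by (rule Suc.hyps) simp
      then show ?thesis using prv_imp_trans[OF prv_Succ_inj] by simp
    qed
  qed (fact Suc.prems)+
qed

lemma prv_Lt_num_cases:
  assumes k: "k \<notin> vars_tm t" "k \<notin> fv b"
    and cases: "\<And>j. j < n \<Longrightarrow> PA_prv (Imp (Eq t (num j)) b)"
  shows "PA_prv (Imp (Lt k t (num n)) b)"
proof (rule prv_ex_elim[OF _ k(2)])
  let ?h = "Eq (Plus t (Succ (Var k))) (num n)"
  have h: "PA_prv (Imp ?h (Eq (Succ (Plus t (Var k))) (num n)))"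
    by (rule prv_eq_trans_under[OF prv_eq_sym_under[OF prv_weaken[OF prv_Plus_Succ]] prv_imp_refl])
  show "PA_prv (Imp ?h b)"
  proof (cases n)
    case 0
    then have "PA_prv (Imp (Eq (Succ (Plus t (Var k))) (num n)) b)"
      using prv_neg_imp[OF prv_Succ_ne_Zero] by simp
    then show ?thesis by (rule prv_imp_trans[OF h])
  next
    case (Suc m)
    then have "PA_prv (Imp (Eq (Succ (Plus t (Var k))) (num n)) (Eq (Plus t (Var k)) (num m)))"
      using prv_Succ_inj by simp
    with h have "PA_prv (Imp ?h (Eq (Plus t (Var k)) (num m)))" by (rule prv_imp_trans)
    moreover have "PA_prv (Imp (Eq (Plus t (Var k)) (num m)) b)"
      by (rule prv_Plus_eq_num_cases[OF k]) (simp add: cases Suc)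
    ultimately show ?thesis by (rule prv_imp_trans)
  qed
qed

lemma prv_Lt_num: "m < n \<Longrightarrow> PA_prv (Lt k (num m) (num n))"
proof -
  assume "m < n"
  then have n: "n = m + Suc (n - m - 1)" by simp
  have "PA_prv (subst k (num (n - m - 1)) (Eq (Plus (num m) (Succ (Var k))) (num n)))"
    using prv_num_Plus[of m "Suc (n - m - 1)"] n by simp
  then show ?thesis by (rule mp[OF prv_ex_intro, rotated]) simp
qed

lemma prv_neg_Lt_num: "n \<le> m \<Longrightarrow> PA_prv (Neg (Lt k (num m) (num n)))"
proof -
  assume "n \<le> m"
  then have "PA_prv (Imp (Eq (num m) (num j)) Falsity)" if "j < n" for j
    using that by (intro prv_imp_Falsity_of_Neg prv_num_neq) simp
  then have "PA_prv (Imp (Lt k (num m) (num n)) Falsity)"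
    by (intro prv_Lt_num_cases) simp_all
  then show ?thesis by (rule prv_Neg_of_imp_Falsity)
qed

lemma prv_Lt_cong:
  assumes "PA_prv (Eq s s')" "PA_prv (Eq t t')"
    and "k \<notin> vars_tm s" "k \<notin> vars_tm t" "k \<notin> vars_tm s'" "k \<notin> vars_tm t'"
  shows "PA_prv (Imp (Lt k s' t') (Lt k s t))"
proof (rule prv_ex_elim)
  let ?h = "Eq (Plus s' (Succ (Var k))) t'"
  have "PA_prv (Imp ?h (Eq (Plus s (Succ (Var k))) (Plus s' (Succ (Var k)))))"
    by (rule prv_Plus_cong_under; rule prv_weaken) (use assms(1) ax_refl in auto)
  then have "PA_prv (Imp ?h (Eq (Plus s (Succ (Var k))) t))"
    by (rule prv_eq_trans_under[OF prv_eq_trans_under[OF _ prv_imp_refl]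
                                   prv_weaken[OF prv_eq_sym[OF assms(2)]]])
  then show "PA_prv (Imp ?h (Lt k s t))"
    using prv_ex_intro_under[of k "Var k" "Eq (Plus s (Succ (Var k))) t" ?h] by simp
  show "k \<notin> fv (Lt k s t)" by simp
qed

lemma prv_Lt_num_Succ_of_Lt:
  assumes "k \<notin> vars_tm s"
  shows "PA_prv (Imp (Lt k s (num K)) (Lt k s (num (Suc K))))"
proof (rule prv_ex_elim)
  let ?h = "Eq (Plus s (Succ (Var k))) (num K)"
  have "PA_prv (Imp ?h (Eq (Plus s (Succ (Succ (Var k)))) (Succ (num K))))"
    by (rule prv_eq_trans_under[OF prv_weaken[OF prv_Plus_Succ] prv_Succ_cong_under[OF prv_imp_refl]])
  then show "PA_prv (Imp ?h (Lt k s (num (Suc K))))"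
    by (intro prv_ex_intro_under[where u = "Succ (Var k)"]) (use assms in simp_all)
qed simp

lemma prv_Lt_num_Succ_of_eq:
  assumes "k \<notin> vars_tm s"
  shows "PA_prv (Imp (Eq s (num K)) (Lt k s (num (Suc K))))"
proof -
  have "PA_prv (Eq (Plus s (Succ Zero)) (Succ s))"
    using prv_eq_trans[OF prv_Plus_Succ prv_Succ_cong[OF prv_Plus_Zero]] .
  then have "PA_prv (Imp (Eq s (num K)) (Eq (Plus s (Succ Zero)) (Succ (num K))))"
    by (rule prv_eq_trans_under[OF prv_weaken prv_Succ_cong_under[OF prv_imp_refl]])
  then show ?thesis
    by (intro prv_ex_intro_under[where u = Zero]) (use assms in simp_all)
qed

lemma prv_Lt_num_cases_Succ:
  assumes "k \<notin> vars_tm s"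
  shows "PA_prv (Imp (Lt k (num K) s) (Disj (Eq s (num (Suc K))) (Lt k (num (Suc K)) s)))"
    (is "PA_prv (Imp _ ?c)")
proof (rule prv_ex_elim)
  have "finite (vars_tm s \<union> {k})" by simp
  from ex_fresh_var[OF this] obtain y where y: "y \<notin> vars_tm s \<union> {k}" ..
  let ?h = "Eq (Plus (num K) (Succ (Var k))) s"
  show "PA_prv (Imp ?h ?c)"
  proof (rule prv_cases_Zero_Succ[of y k])
    show "y \<noteq> k" "y \<notin> fv (Imp ?h ?c)" using y by auto
    let ?hz = "Conj (Eq (Var k) Zero) ?h"
    have "PA_prv (Imp ?hz (Eq (Plus (num K) (Succ (Var k))) (Succ (num K))))"
      using prv_Plus_cong_under[OF prv_weaken[OF ax_refl] prv_Succ_cong_under[OF prv_conj_fst]]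
        prv_weaken[OF prv_eq_trans[OF prv_Plus_Succ prv_Succ_cong[OF prv_Plus_Zero]]]
      by (rule prv_eq_trans_under)
    then have "PA_prv (Imp ?hz (Eq s (Succ (num K))))"
      by (rule prv_eq_trans_under[OF prv_eq_sym_under[OF prv_conj_snd]])
    then have "PA_prv (Imp ?hz ?c)" by (rule prv_taut_mp1) (auto simp: tautology_def)
    then show "PA_prv (Imp (Eq (Var k) Zero) (Imp ?h ?c))" by (rule prv_curry)
  next
    let ?hs = "Conj (Eq (Var k) (Succ (Var y))) ?h"
    have "PA_prv (Imp ?hs (Eq (Plus (num K) (Succ (Succ (Var y)))) (Plus (num K) (Succ (Var k)))))"
      by (rule prv_Plus_cong_under[OF prv_weaken[OF ax_refl]
                                      prv_Succ_cong_under[OF prv_eq_sym_under[OF prv_conj_fst]]])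
    then have "PA_prv (Imp ?hs (Eq (Plus (num K) (Succ (Succ (Var y)))) s))"
      by (rule prv_eq_trans_under[OF _ prv_conj_snd])
    then have "PA_prv (Imp ?hs (Eq (Plus (Succ (num K)) (Succ (Var y))) s))"
      by (rule prv_eq_trans_under[OF prv_weaken[OF prv_eq_trans[OF prv_Succ_Plus prv_eq_sym[OF prv_Plus_Succ]]]])
    then have "PA_prv (Imp ?hs (Lt k (num (Suc K)) s))"
      by (intro prv_ex_intro_under[where u = "Var y"]) (use y assms in simp_all)
    then have "PA_prv (Imp ?hs ?c)" by (rule prv_taut_mp1) (auto simp: tautology_def)
    then show "PA_prv (Imp (Eq (Var k) (Succ (Var y))) (Imp ?h ?c))" by (rule prv_curry)
  qed
qed (use assms in simp)

lemma prv_Lt_trichotomy: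
  assumes "k \<noteq> w"
  shows "PA_prv (Disj (Lt k (Var w) (num K)) (Disj (Eq (Var w) (num K)) (Lt k (num K) (Var w))))"
proof (induct K)
  case 0
  have "finite {w, k}" by simp
  from ex_fresh_var[OF this] obtain y where y: "y \<notin> {w, k}" ..
  let ?c = "Disj (Lt k (Var w) Zero) (Disj (Eq (Var w) Zero) (Lt k Zero (Var w)))"
  have "PA_prv ?c"
  proof (rule prv_cases_Zero_Succ[of y w])
    show "y \<noteq> w" "y \<notin> fv ?c" using y by auto
    show "PA_prv (Imp (Eq (Var w) Zero) ?c)"
      by (rule ax_taut) (auto simp: tautology_def)
    have "PA_prv (Imp (Eq (Var w) (Succ (Var y))) (Eq (Plus Zero (Succ (Var y))) (Var w)))"
      by (rule prv_eq_trans_under[OF prv_weaken[OF prv_Zero_Plus] prv_eq_sym_under[OF prv_imp_refl]])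
    then have "PA_prv (Imp (Eq (Var w) (Succ (Var y))) (Lt k Zero (Var w)))"
      by (intro prv_ex_intro_under[where u = "Var y"]) (use y assms in simp_all)
    then show "PA_prv (Imp (Eq (Var w) (Succ (Var y))) ?c)"
      by (rule prv_taut_mp1) (auto simp: tautology_def)
  qed
  then show ?case by simp
next
  case (Suc K)
  have k: "k \<notin> vars_tm (Var w)" using assms by simp
  from Suc prv_Lt_num_Succ_of_Lt[OF k] prv_Lt_num_Succ_of_eq[OF k] prv_Lt_num_cases_Succ[OF k]
  show ?case by (rule prv_taut_mp4) (auto simp: tautology_def)
qed


section \<open>Bounded formulas are decided by PA\<close>

abbreviation All_lt :: "nat \<Rightarrow> nat \<Rightarrow> tm \<Rightarrow> fm \<Rightarrow> fm" where
  "All_lt i k t a \<equiv> All i (Imp (Lt k (Var i) t) a)"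

abbreviation Ex_lt :: "nat \<Rightarrow> nat \<Rightarrow> tm \<Rightarrow> fm \<Rightarrow> fm" where
  "Ex_lt i k t a \<equiv> Ex i (Conj (Lt k (Var i) t) a)"

inductive bounded :: "fm \<Rightarrow> bool" where
  bounded_Eq: "bounded (Eq s t)"
| bounded_Lt: "k \<notin> vars_tm s \<Longrightarrow> k \<notin> vars_tm t \<Longrightarrow> bounded (Lt k s t)"
| bounded_Neg: "bounded a \<Longrightarrow> bounded (Neg a)"
| bounded_Conj: "bounded a \<Longrightarrow> bounded b \<Longrightarrow> bounded (Conj a b)"
| bounded_Disj: "bounded a \<Longrightarrow> bounded b \<Longrightarrow> bounded (Disj a b)"
| bounded_Imp: "bounded a \<Longrightarrow> bounded b \<Longrightarrow> bounded (Imp a b)"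
| bounded_Iff: "bounded a \<Longrightarrow> bounded b \<Longrightarrow> bounded (Iff a b)"
| bounded_All_lt: "bounded a \<Longrightarrow> i \<noteq> k \<Longrightarrow> i \<notin> vars_tm t \<Longrightarrow> k \<notin> vars_tm t \<Longrightarrow>
    bounded (All_lt i k t a)"
| bounded_Ex_lt: "bounded a \<Longrightarrow> i \<noteq> k \<Longrightarrow> i \<notin> vars_tm t \<Longrightarrow> k \<notin> vars_tm t \<Longrightarrow>
    bounded (Ex_lt i k t a)"

lemma bounded_subst: "bounded a \<Longrightarrow> vars_tm u = {} \<Longrightarrow> bounded (subst x u a)"
proof (induct a rule: bounded.induct)
  case (bounded_Lt k s t)
  then show ?case by (cases "k = x") (auto intro!: bounded.intros)
next
  case (bounded_All_lt a i k t)
  then show ?case by (cases "i = x"; cases "k = x") (auto intro!: bounded.intros)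
next
  case (bounded_Ex_lt a i k t)
  then show ?case by (cases "i = x"; cases "k = x") (auto intro!: bounded.intros)
qed (auto intro!: bounded.intros)

lemma holds_All_lt [simp]:
  "i \<noteq> k \<Longrightarrow> i \<notin> vars_tm t \<Longrightarrow> k \<notin> vars_tm t \<Longrightarrow>
   holds e (All_lt i k t a) = (\<forall>j < val e t. holds (e(i:=j)) a)"
  by (subst holds.simps, subst holds.simps, subst holds_Lt) auto

lemma holds_Ex_lt [simp]:
  "i \<noteq> k \<Longrightarrow> i \<notin> vars_tm t \<Longrightarrow> k \<notin> vars_tm t \<Longrightarrow>
   holds e (Ex_lt i k t a) = (\<exists>j < val e t. holds (e(i:=j)) a)"
  by (subst holds.simps, subst holds.simps, subst holds_Lt) auto

lemma prv_imp_of_num_instances: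
  assumes "k \<noteq> i" "k \<notin> fv a"
    and "\<And>j. j < n \<Longrightarrow> PA_prv (subst i (num j) a)"
  shows "PA_prv (Imp (Lt k (Var i) (num n)) a)"
  using assms by (intro prv_Lt_num_cases prv_eq_num_subst) simp_all

lemma prv_Lt_closed_num:
  assumes "vars_tm t = {}" "k \<notin> vars_tm s"
  shows "PA_prv (Imp (Lt k s t) (Lt k s (num (val e t))))"
    and "PA_prv (Imp (Lt k s (num (val e t))) (Lt k s t))"
  using prv_Lt_cong[OF ax_refl prv_eq_sym[OF prv_eq_num_val]]
    prv_Lt_cong[OF ax_refl prv_eq_num_val] assms by simp_all

lemma prv_All_lt:
  assumes "vars_tm t = {}" "i \<noteq> k" "fv a \<subseteq> {i}"
    and "\<And>j. j < val e t \<Longrightarrow> PA_prv (subst i (num j) a)"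
  shows "PA_prv (All_lt i k t a)"
proof -
  have "PA_prv (Imp (Lt k (Var i) t) (Lt k (Var i) (num (val e t))))"
    using prv_Lt_closed_num(1)[OF assms(1)] assms(2) by simp
  moreover have "PA_prv (Imp (Lt k (Var i) (num (val e t))) a)"
    using assms by (intro prv_imp_of_num_instances) auto
  ultimately show ?thesis by (rule gen[OF prv_imp_trans])
qed

lemma prv_neg_All_lt:
  assumes "vars_tm t = {}" "i \<noteq> k" "j < val e t" "PA_prv (Neg (subst i (num j) a))"
  shows "PA_prv (Neg (All_lt i k t a))"
proof -
  have "PA_prv (Lt k (num j) t)"
    using mp[OF prv_Lt_closed_num(2) prv_Lt_num[OF assms(3)]] assms(1) by simp
  moreover have "PA_prv (Imp (All_lt i k t a) (Imp (Lt k (num j) t) (subst i (num j) a)))"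
    using ax_inst[of i "num j" "Imp (Lt k (Var i) t) a"] assms(1,2) by simp
  ultimately show ?thesis using assms(4)
    by (rule prv_taut_mp3) (auto simp: tautology_def)
qed


lemma prv_Ex_lt:
  assumes "vars_tm t = {}" "i \<noteq> k" "j < val e t" "PA_prv (subst i (num j) a)"
  shows "PA_prv (Ex_lt i k t a)"
proof -
  have "PA_prv (Lt k (num j) t)"
    using mp[OF prv_Lt_closed_num(2) prv_Lt_num[OF assms(3)]] assms(1) by simp
  with assms(4) have "PA_prv (Conj (Lt k (num j) t) (subst i (num j) a))"
    by (rule prv_taut_mp2) (auto simp: tautology_def)
  moreover have "PA_prv (Imp (Conj (Lt k (num j) t) (subst i (num j) a)) (Ex_lt i k t a))"
    using prv_ex_intro[of i "num j" "Conj (Lt k (Var i) t) a"] assms(1,2) by simp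
  ultimately show ?thesis by (rule mp[rotated])
qed

lemma prv_neg_Ex_lt:
  assumes "vars_tm t = {}" "i \<noteq> k" "fv a \<subseteq> {i}"
    and "\<And>j. j < val e t \<Longrightarrow> PA_prv (Neg (subst i (num j) a))"
  shows "PA_prv (Neg (Ex_lt i k t a))"
proof -
  have "PA_prv (Imp (Lt k (Var i) t) (Lt k (Var i) (num (val e t))))"
    using prv_Lt_closed_num(1)[OF assms(1)] assms(2) by simp
  moreover have "PA_prv (Imp (Lt k (Var i) (num (val e t))) (Neg a))"
    using assms by (intro prv_imp_of_num_instances) auto
  ultimately have "PA_prv (Imp (Lt k (Var i) t) (Neg a))" by (rule prv_imp_trans)
  then have "PA_prv (Imp (Conj (Lt k (Var i) t) a) Falsity)"
    by (rule prv_taut_mp1) (auto simp: tautology_def Falsity_def)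
  then have "PA_prv (Imp (Ex_lt i k t a) Falsity)" by (rule prv_ex_elim) simp
  then show ?thesis by (rule prv_Neg_of_imp_Falsity)
qed

definition signed :: "(nat \<Rightarrow> nat) \<Rightarrow> fm \<Rightarrow> fm" where
  "signed e a = (if holds e a then a else Neg a)"

lemma prv_signed_Eq:
  assumes "vars_tm s = {}" "vars_tm t = {}"
  shows "PA_prv (signed e (Eq s t))"
proof -
  have s: "PA_prv (Eq s (num (val e s)))" and t: "PA_prv (Eq t (num (val e t)))"
    using assms prv_eq_num_val by auto
  show ?thesis
  proof (cases "val e s = val e t")
    case True
    then show ?thesis using prv_eq_trans[OF s prv_eq_sym[OF t[folded True]]] by (simp add: signed_def)
  next
    case False
    have "PA_prv (Imp (Eq s t) (Eq (num (val e s)) (num (val e t))))"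
      by (rule prv_eq_trans_under[OF prv_eq_trans_under[OF prv_weaken[OF prv_eq_sym[OF s]]
                                      prv_imp_refl] prv_weaken[OF t]])
    with prv_num_neq[OF False] have "PA_prv (Neg (Eq s t))"
      by (rule prv_taut_mp2) (auto simp: tautology_def)
    then show ?thesis using False by (simp add: signed_def)
  qed
qed

lemma prv_signed_Lt:
  assumes "vars_tm s = {}" "vars_tm t = {}"
  shows "PA_prv (signed e (Lt k s t))"
proof -
  have s: "PA_prv (Eq s (num (val e s)))" and t: "PA_prv (Eq t (num (val e t)))"
    using assms prv_eq_num_val by auto
  have holds: "holds e (Lt k s t) = (val e s < val e t)"
    by (rule holds_Lt) (simp_all add: assms)
  show ?thesis
  proof (cases "val e s < val e t")
    case True
    have "PA_prv (Imp (Lt k (num (val e s)) (num (val e t))) (Lt k s t))"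
      using prv_Lt_cong[OF s t] assms by simp
    then have "PA_prv (Lt k s t)" using prv_Lt_num[OF True] by (rule mp)
    then show ?thesis unfolding signed_def holds using True by simp
  next
    case False
    have "PA_prv (Imp (Lt k s t) (Lt k (num (val e s)) (num (val e t))))"
      using prv_Lt_cong[OF prv_eq_sym[OF s] prv_eq_sym[OF t]] assms by simp
    moreover have "PA_prv (Neg (Lt k (num (val e s)) (num (val e t))))"
      using False by (intro prv_neg_Lt_num) simp
    ultimately have "PA_prv (Neg (Lt k s t))"
      by (rule prv_taut_mp2) (auto simp: tautology_def)
    then show ?thesis unfolding signed_def holds using False by simp
  qed
qed

lemma prv_signed_Neg: "PA_prv (signed e a) \<Longrightarrow> PA_prv (signed e (Neg a))"
  by (cases "holds e a") (auto simp: signed_def elim: prv_taut_mp1 simp: tautology_def)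

lemma prv_signed_connective:
  assumes "PA_prv (signed e a)" "PA_prv (signed e b)"
    and "c \<in> {Conj a b, Disj a b, Imp a b, Iff a b}"
  shows "PA_prv (signed e c)"
  using assms(1,2) by (rule prv_taut_mp2)
    (use assms(3) in \<open>cases "holds e a"; cases "holds e b"; auto simp: signed_def tautology_def\<close>)


lemma prv_signed_All_lt:
  assumes t: "vars_tm t = {}" and vars: "i \<noteq> k" "i \<notin> vars_tm t" "k \<notin> vars_tm t"
    and b: "fv b \<subseteq> {i}" and inst: "\<And>j. PA_prv (signed e (subst i (num j) b))"
  shows "PA_prv (signed e (All_lt i k t b))"
proof (cases "\<forall>j < val e t. holds (e(i:=j)) b")
  case True
  then have "PA_prv (subst i (num j) b)" if "j < val e t" for j
    using inst[of j] that by (simp add: signed_def holds_subst)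
  with t vars(1) b have "PA_prv (All_lt i k t b)" by (rule prv_All_lt)
  then show ?thesis unfolding signed_def holds_All_lt[OF vars] using True by simp
next
  case False
  then obtain j where j: "j < val e t" "\<not> holds (e(i:=j)) b" by auto
  then have "PA_prv (Neg (subst i (num j) b))" using inst[of j] by (simp add: signed_def holds_subst)
  with t vars(1) j(1) have "PA_prv (Neg (All_lt i k t b))" by (rule prv_neg_All_lt)
  then show ?thesis unfolding signed_def holds_All_lt[OF vars] by (simp only: False if_False)
qed

lemma prv_signed_Ex_lt:
  assumes t: "vars_tm t = {}" and vars: "i \<noteq> k" "i \<notin> vars_tm t" "k \<notin> vars_tm t"
    and b: "fv b \<subseteq> {i}" and inst: "\<And>j. PA_prv (signed e (subst i (num j) b))"
  shows "PA_prv (signed e (Ex_lt i k t b))"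
proof (cases "\<exists>j < val e t. holds (e(i:=j)) b")
  case True
  then obtain j where j: "j < val e t" "holds (e(i:=j)) b" by auto
  then have "PA_prv (subst i (num j) b)" using inst[of j] by (simp add: signed_def holds_subst)
  with t vars(1) j(1) have "PA_prv (Ex_lt i k t b)" by (rule prv_Ex_lt)
  then show ?thesis unfolding signed_def holds_Ex_lt[OF vars] using True by simp
next
  case False
  then have "PA_prv (Neg (subst i (num j) b))" if "j < val e t" for j
    using inst[of j] that by (simp add: signed_def holds_subst)
  with t vars(1) b have "PA_prv (Neg (Ex_lt i k t b))" by (rule prv_neg_Ex_lt)
  then show ?thesis unfolding signed_def holds_Ex_lt[OF vars] by (simp only: False if_False)
qed

lemma prv_signed: "bounded a \<Longrightarrow> fv a = {} \<Longrightarrow> PA_prv (signed e a)"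
proof (induct "size a" arbitrary: a rule: less_induct)
  case less
  from less.prems(1) show ?case
  proof cases
    case (bounded_Eq s t)
    then show ?thesis using less.prems(2) by (auto intro!: prv_signed_Eq)
  next
    case (bounded_Lt k s t)
    then show ?thesis using less.prems(2) by (auto intro!: prv_signed_Lt)
  next
    case (bounded_Neg b)
    then show ?thesis using less by (auto intro: prv_signed_Neg)
  next
    case (bounded_Conj b c)
    then have "PA_prv (signed e b)" "PA_prv (signed e c)" using less by auto
    then show ?thesis unfolding bounded_Conj(1) by (rule prv_signed_connective) simp
  next
    case (bounded_Disj b c)
    then have "PA_prv (signed e b)" "PA_prv (signed e c)" using less by auto
    then show ?thesis unfolding bounded_Disj(1) by (rule prv_signed_connective) simp
  next
    case (bounded_Imp b c)
    then have "PA_prv (signed e b)" "PA_prv (signed e c)" using less by auto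
    then show ?thesis unfolding bounded_Imp(1) by (rule prv_signed_connective) simp
  next
    case (bounded_Iff b c)
    then have "PA_prv (signed e b)" "PA_prv (signed e c)" using less by auto
    then show ?thesis unfolding bounded_Iff(1) by (rule prv_signed_connective) simp
  next
    case (bounded_All_lt b i k t)
    have "fv b \<subseteq> {i}" "vars_tm t = {}" using less.prems(2) bounded_All_lt by auto
    moreover have "PA_prv (signed e (subst i (num j) b))" for j
      using bounded_All_lt \<open>fv b \<subseteq> {i}\<close> by (intro less.hyps bounded_subst) auto
    ultimately show ?thesis using bounded_All_lt by (simp add: prv_signed_All_lt)
  next
    case (bounded_Ex_lt b i k t)
    have "fv b \<subseteq> {i}" "vars_tm t = {}" using less.prems(2) bounded_Ex_lt by auto
    moreover have "PA_prv (signed e (subst i (num j) b))" for j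
      using bounded_Ex_lt \<open>fv b \<subseteq> {i}\<close> by (intro less.hyps bounded_subst) auto
    ultimately show ?thesis using bounded_Ex_lt by (simp add: prv_signed_Ex_lt)
  qed
qed

lemma prv_bounded_true: "bounded a \<Longrightarrow> fv a = {} \<Longrightarrow> holds e a \<Longrightarrow> PA_prv a"
  using prv_signed[of a e] by (simp add: signed_def)

lemma prv_bounded_false: "bounded a \<Longrightarrow> fv a = {} \<Longrightarrow> \<not> holds e a \<Longrightarrow> PA_prv (Neg a)"
  using prv_signed[of a e] by (simp add: signed_def)


section \<open>Functions with a bounded graph are representable\<close>

definition bounded_graph :: "nat \<Rightarrow> (nat \<Rightarrow> nat \<Rightarrow> bool) \<Rightarrow> fm \<Rightarrow> nat \<Rightarrow> nat \<Rightarrow> bool" where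
  "bounded_graph k P D z w \<longleftrightarrow> bounded D \<and> fv D \<subseteq> {z, w} \<and> z \<noteq> w \<and> k \<notin> {z, w} \<and>
     (\<forall>e. holds e D = P (e z) (e w)) \<and> PA_prv (Imp D (Lt k (Var z) (Succ (Var w))))"

lemma bounded_graph_closed_instance:
  assumes "bounded_graph k P D z w"
  shows "bounded (subst z (num l) (subst w (num j) D))"
    and "fv (subst z (num l) (subst w (num j) D)) = {}"
    and "holds e (subst z (num l) (subst w (num j) D)) = P l j"
  using assms by (auto simp: bounded_graph_def holds_subst intro!: bounded_subst)

lemma prv_bounded_graph_instance:
  assumes "bounded_graph k P D z w" "P l j"
  shows "PA_prv (subst z (num l) (subst w (num j) D))"
  using bounded_graph_closed_instance[OF assms(1)] assms(2) by (intro prv_bounded_true) auto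

lemma prv_neg_bounded_graph_instance:
  assumes "bounded_graph k P D z w" "\<not> P l j"
  shows "PA_prv (Neg (subst z (num l) (subst w (num j) D)))"
  using bounded_graph_closed_instance[OF assms(1)] assms(2) by (intro prv_bounded_false) auto

lemma prv_bounded_graph_cases:
  assumes D: "bounded_graph k P D z w" and "k \<notin> fv b"
    and cases: "\<And>l. l \<le> j \<Longrightarrow> PA_prv (Imp (Eq (Var z) (num l)) (Imp (subst w (num j) D) b))"
  shows "PA_prv (Imp (subst w (num j) D) b)"
proof -
  let ?D = "subst w (num j) D"
  have "PA_prv (subst w (num j) (Imp D (Lt k (Var z) (Succ (Var w)))))"
    using D by (intro prv_inst) (auto simp: bounded_graph_def)
  then have "PA_prv (Imp ?D (Lt k (Var z) (num (Suc j))))"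
    using D by (simp add: bounded_graph_def)
  moreover have "PA_prv (Imp (Lt k (Var z) (num (Suc j))) (Imp ?D b))"
    using D assms(2) cases by (intro prv_Lt_num_cases) (auto simp: bounded_graph_def)
  ultimately show ?thesis by (rule prv_taut_mp2) (auto simp: tautology_def)
qed

lemma prv_neg_bounded_graph:
  assumes D: "bounded_graph k P D z w" and none: "\<And>l. \<not> P l j"
  shows "PA_prv (Neg (subst w (num j) D))"
proof -
  have "PA_prv (subst z (num l) (Neg (subst w (num j) D)))" for l
    using prv_neg_bounded_graph_instance[OF D none] by simp
  then have "PA_prv (Imp (Eq (Var z) (num l)) (Neg (subst w (num j) D)))" for l
    by (rule prv_eq_num_subst)
  then have "PA_prv (Imp (Eq (Var z) (num l)) (Imp (subst w (num j) D) Falsity))" for l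
    by (rule prv_taut_mp1) (auto simp: tautology_def)
  then have "PA_prv (Imp (subst w (num j) D) Falsity)"
    using D by (intro prv_bounded_graph_cases) simp_all
  then show ?thesis by (rule prv_Neg_of_imp_Falsity)
qed

lemma prv_bounded_graph_output:
  assumes D: "bounded_graph k P D z w" and unique: "\<And>l. P l j \<Longrightarrow> l = f"
  shows "PA_prv (Imp (subst w (num j) D) (Eq (Var z) (num f)))"
proof (rule prv_bounded_graph_cases[OF D])
  show "k \<notin> fv (Eq (Var z) (num f))" using D by (auto simp: bounded_graph_def)
  fix l
  show "PA_prv (Imp (Eq (Var z) (num l)) (Imp (subst w (num j) D) (Eq (Var z) (num f))))"
  proof (cases "l = f")
    case True
    show ?thesis unfolding True by (rule ax_taut) (auto simp: tautology_def)
  next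
    case False
    then have "\<not> P l j" using unique by blast
    then have "PA_prv (subst z (num l) (Neg (subst w (num j) D)))"
      using prv_neg_bounded_graph_instance[OF D] by simp
    then have "PA_prv (Imp (Eq (Var z) (num l)) (Neg (subst w (num j) D)))"
      by (rule prv_eq_num_subst)
    then show ?thesis by (rule prv_taut_mp1) (auto simp: tautology_def)
  qed
qed



text \<open>Requiring the witness to be the least one makes the graph provably functional.\<close>

definition Least_witness :: "nat \<Rightarrow> nat \<Rightarrow> nat \<Rightarrow> (nat \<Rightarrow> nat \<Rightarrow> fm) \<Rightarrow> nat \<Rightarrow> nat \<Rightarrow> fm" where
  "Least_witness k z' w' D z w = Ex w (Conj (D z w) (All_lt w' k (Var w) (All z' (Neg (D z' w')))))"

lemma ex_least_witness:
  fixes P :: "nat \<Rightarrow> nat \<Rightarrow> bool"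
  assumes "P f j" "\<And>l j. P l j \<Longrightarrow> l = f"
  obtains w0 where "P f w0" "\<And>l j. j < w0 \<Longrightarrow> \<not> P l j"
proof -
  obtain w0 where "\<exists>l. P l w0" "\<And>j. j < w0 \<Longrightarrow> \<not> (\<exists>l. P l j)"
    using exists_least_iff[of "\<lambda>j. \<exists>l. P l j"] assms(1) by blast
  then show ?thesis using assms(2) that by blast
qed

lemma prv_Least_witness:
  assumes D1: "bounded_graph k P (D z w) z w" and D2: "bounded_graph k P (D z' w') z' w'"
    and vars: "distinct [z, w, z', w']"
    and "P f j" and unique: "\<And>l j. P l j \<Longrightarrow> l = f"
  shows "PA_prv (subst z (num f) (Least_witness k z' w' D z w))"
proof -
  obtain w0 where w0: "P f w0" "\<And>l j. j < w0 \<Longrightarrow> \<not> P l j"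
    using ex_least_witness assms(4) unique by blast
  let ?M = "All z' (Neg (D z' w'))"
  have fv: "fv (D z w) \<subseteq> {z, w}" "fv (D z' w') \<subseteq> {z', w'}"
    using D1 D2 by (auto simp: bounded_graph_def)
  have dist: "z \<noteq> w" "w \<noteq> z" "z \<noteq> z'" "z' \<noteq> z" "z \<noteq> w'" "w' \<noteq> z" "w \<noteq> z'" "z' \<noteq> w"
    "w \<noteq> w'" "w' \<noteq> w" "z' \<noteq> w'" "w' \<noteq> z'" "k \<noteq> z" "k \<noteq> w" "k \<noteq> z'" "k \<noteq> w'"
    using vars D1 D2 by (auto simp: bounded_graph_def)
  have "PA_prv (subst z (num f) (subst w (num w0) (D z w)))"
    using prv_bounded_graph_instance[OF D1 w0(1)] .
  then have witness: "PA_prv (subst w (num w0) (subst z (num f) (D z w)))"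
    using dist by (simp add: subst_commute)
  have "PA_prv (subst w' (num j) ?M)" if "j < w0" for j
    using gen[OF prv_neg_bounded_graph[OF D2 w0(2)[OF that]]] dist by simp
  then have "PA_prv (Imp (Lt k (Var w') (num w0)) ?M)"
    using fv dist by (intro prv_imp_of_num_instances) auto
  then have least: "PA_prv (All_lt w' k (num w0) ?M)" by (rule gen)
  have "PA_prv (Conj (subst w (num w0) (subst z (num f) (D z w))) (All_lt w' k (num w0) ?M))"
    using witness least by (rule prv_taut_mp2) (auto simp: tautology_def)
  moreover have "subst w (num w0) (D z' w') = D z' w'" "subst z (num f) (D z' w') = D z' w'"
    using fv dist by (auto intro!: subst_triv)
  ultimately have "PA_prv (subst w (num w0) (Conj (subst z (num f) (D z w)) (All_lt w' k (Var w) ?M)))"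
    using dist fv by simp
  with prv_ex_intro have "PA_prv (Ex w (Conj (subst z (num f) (D z w)) (All_lt w' k (Var w) ?M)))"
    by (rule mp) simp
  then show ?thesis
    using \<open>subst z (num f) (D z' w') = D z' w'\<close> fv dist by (simp add: Least_witness_def)
qed


lemma prv_All_lt_All_inst:
  assumes "w' \<notin> {k, w, z'}"
  shows "PA_prv (Imp (All_lt w' k (Var w) (All z' a))
                     (Imp (Lt k (num j) (Var w)) (subst z' (num l) (subst w' (num j) a))))"
proof -
  have "PA_prv (Imp (All_lt w' k (Var w) (All z' a))
                    (subst w' (num j) (Imp (Lt k (Var w') (Var w)) (All z' a))))"
    by (rule ax_inst) simp
  then have "PA_prv (Imp (All_lt w' k (Var w) (All z' a))
                         (Imp (Lt k (num j) (Var w)) (All z' (subst w' (num j) a))))"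
    using assms by auto
  moreover have "PA_prv (Imp (All z' (subst w' (num j) a)) (subst z' (num l) (subst w' (num j) a)))"
    by (rule ax_inst) simp
  ultimately show ?thesis by (rule prv_taut_mp2) (auto simp: tautology_def)
qed

lemma prv_Least_witness_output:
  assumes D1: "bounded_graph k P (D z w) z w" and D2: "bounded_graph k P (D z' w') z' w'"
    and vars: "distinct [z, w, z', w']"
    and "P f j" and unique: "\<And>l j. P l j \<Longrightarrow> l = f"
  shows "PA_prv (Imp (Least_witness k z' w' D z w) (Eq (Var z) (num f)))"
proof -
  obtain w0 where w0: "P f w0" "\<And>l j. j < w0 \<Longrightarrow> \<not> P l j"
    using ex_least_witness assms(4) unique by blast
  have fv: "fv (D z w) \<subseteq> {z, w}" "fv (D z' w') \<subseteq> {z', w'}"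
    using D1 D2 by (auto simp: bounded_graph_def)
  have dist: "z \<noteq> w" "w \<noteq> z" "z \<noteq> z'" "z' \<noteq> z" "z \<noteq> w'" "w' \<noteq> z" "w \<noteq> z'" "z' \<noteq> w"
    "w \<noteq> w'" "w' \<noteq> w" "z' \<noteq> w'" "w' \<noteq> z'" "k \<noteq> z" "k \<noteq> w" "k \<noteq> z'" "k \<noteq> w'"
    using vars D1 D2 by (auto simp: bounded_graph_def)
  let ?M = "All_lt w' k (Var w) (All z' (Neg (D z' w')))"
  let ?H = "Conj (D z w) ?M" and ?G = "Eq (Var z) (num f)"
  have "PA_prv (subst w (num j) (Imp ?H ?G))" if "j < w0" for j
  proof -
    have "PA_prv (Neg (subst w (num j) (D z w)))"
      using prv_neg_bounded_graph[OF D1 w0(2)[OF that]] .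
    then have "PA_prv (Imp (Conj (subst w (num j) (D z w)) (subst w (num j) ?M)) ?G)"
      by (rule prv_taut_mp1) (auto simp: tautology_def)
    then show ?thesis using dist by simp
  qed
  then have below: "PA_prv (Imp (Lt k (Var w) (num w0)) (Imp ?H ?G))"
    using fv dist by (intro prv_imp_of_num_instances) auto
  have "PA_prv (Imp (subst w (num w0) (D z w)) ?G)"
    using prv_bounded_graph_output[OF D1] unique by blast
  then have "PA_prv (Imp (Conj (subst w (num w0) (D z w)) (subst w (num w0) ?M)) ?G)"
    by (rule prv_taut_mp1) (auto simp: tautology_def)
  then have "PA_prv (subst w (num w0) (Imp ?H ?G))" using dist by simp
  then have at: "PA_prv (Imp (Eq (Var w) (num w0)) (Imp ?H ?G))" by (rule prv_eq_num_subst)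
  have "PA_prv (Imp ?M (Imp (Lt k (num w0) (Var w))
                               (Neg (subst z' (num f) (subst w' (num w0) (D z' w'))))))"
    using prv_All_lt_All_inst[of w' k w z' "Neg (D z' w')" w0 f] dist by simp
  with prv_bounded_graph_instance[OF D2 w0(1)]
  have above: "PA_prv (Imp (Lt k (num w0) (Var w)) (Imp ?H ?G))"
    by (rule prv_taut_mp2) (auto simp: tautology_def)
  from prv_Lt_trichotomy[OF dist(14), of w0] below at above
  have "PA_prv (Imp ?H ?G)" by (rule prv_taut_mp4) (auto simp: tautology_def)
  then have "PA_prv (Imp (Ex w ?H) ?G)" using dist by (intro prv_ex_elim) auto
  then show ?thesis by (simp add: Least_witness_def)
qed

definition represents :: "fm \<Rightarrow> nat \<Rightarrow> nat \<Rightarrow> (nat \<Rightarrow> nat) \<Rightarrow> bool" where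
  "represents R u z F \<longleftrightarrow> u \<noteq> z \<and> fv R \<subseteq> {u, z} \<and>
     (\<forall>n. PA_prv (subst z (num (F n)) (subst u (num n) R)) \<and>
          PA_prv (Imp (subst u (num n) R) (Eq (Var z) (num (F n)))))"

lemma subst_Least_witness:
  assumes "vars_tm t = {}" "u \<notin> {k, z', w', w}"
  shows "subst u t (Least_witness k z' w' D z w) = Least_witness k z' w' (\<lambda>a c. subst u t (D a c)) z w"
  using assms by (simp add: Least_witness_def)

lemma represents_Least_witness:
  assumes D1: "\<And>n. bounded_graph k (P n) (subst u (num n) (D z w)) z w"
    and D2: "\<And>n. bounded_graph k (P n) (subst u (num n) (D z' w')) z' w'"
    and vars: "distinct [u, z, w, z', w']" "u \<noteq> k"
    and fv: "fv (D z w) \<subseteq> {u, z, w}" "fv (D z' w') \<subseteq> {u, z', w'}"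
    and graph: "\<And>n. \<exists>j. P n (F n) j" "\<And>n l j. P n l j \<Longrightarrow> l = F n"
  shows "represents (Least_witness k z' w' D z w) u z F"
  unfolding represents_def
proof (intro conjI allI)
  show "u \<noteq> z" using vars by simp
  show "fv (Least_witness k z' w' D z w) \<subseteq> {u, z}"
    using fv by (auto simp: Least_witness_def)
  fix n
  have inst: "subst u (num n) (Least_witness k z' w' D z w) =
      Least_witness k z' w' (\<lambda>a c. subst u (num n) (D a c)) z w"
    using vars by (intro subst_Least_witness) auto
  obtain j where j: "P n (F n) j" using graph(1) by blast
  show "PA_prv (subst z (num (F n)) (subst u (num n) (Least_witness k z' w' D z w)))"
    unfolding inst using vars by (intro prv_Least_witness[OF D1 D2 _ j graph(2)]) auto
  show "PA_prv (Imp (subst u (num n) (Least_witness k z' w' D z w)) (Eq (Var z) (num (F n))))"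
    unfolding inst using vars by (intro prv_Least_witness_output[OF D1 D2 _ j graph(2)]) auto
qed

lemma prv_Ex_Conj_iff:
  assumes "PA_prv (Imp a (Eq (Var y) (num k)))" "PA_prv (subst y (num k) a)"
  shows "PA_prv (Iff (Ex y (Conj a b)) (subst y (num k) b))"
proof -
  have "PA_prv (Imp (Eq (Var y) (num k)) (Imp b (subst y (num k) b)))"
    using ax_eqsub[of y "Var y" b "num k"] by simp
  with assms(1) have "PA_prv (Imp (Conj a b) (subst y (num k) b))"
    by (rule prv_taut_mp2) (auto simp: tautology_def)
  then have "PA_prv (Imp (Ex y (Conj a b)) (subst y (num k) b))"
    by (rule prv_ex_elim) simp
  moreover have "PA_prv (Imp (Conj (subst y (num k) a) (subst y (num k) b)) (Ex y (Conj a b)))"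
    using prv_ex_intro[of y "num k" "Conj a b"] by simp
  ultimately show ?thesis using assms(2) by (rule prv_taut_mp3) (auto simp: tautology_def)
qed

lemma prv_Ex_Eq_num_iff: "PA_prv (Iff (Ex y (Conj (Eq (Var y) (num k)) b)) (subst y (num k) b))"
  using prv_Ex_Conj_iff[OF prv_imp_refl, of y k] ax_refl by simp

lemma prv_represents_iff:
  assumes "represents R u z F" "fv b \<subseteq> {z}"
  shows "PA_prv (Iff (subst u (num n) (Ex z (Conj R b))) (subst z (num (F n)) b))"
proof -
  have "subst u (num n) b = b" using assms by (intro subst_triv) (auto simp: represents_def)
  then show ?thesis using assms(1) prv_Ex_Conj_iff[of "subst u (num n) R" z "F n" b]
    by (simp add: represents_def)
qed


section \<open>Arithmetization of the codes\<close>

text \<open>\<open>z = prod_encode (x, y)\<close>, with both sides doubled to avoid the division in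
  \<open>triangle (x + y) = (x + y) (x + y + 1) / 2\<close>.\<close>

definition Pair_eq :: "tm \<Rightarrow> tm \<Rightarrow> tm \<Rightarrow> fm" where
  "Pair_eq x y z = Eq (Plus z z) (Plus (Plus (Times (Plus x y) (Succ (Plus x y))) x) x)"

lemma holds_Pair_eq [simp]: "holds e (Pair_eq x y z) = (val e z = prod_encode (val e x, val e y))"
proof -
  have twice_triangle: "2 * triangle n = n * Suc n" for n
    by (induct n) (auto simp: algebra_simps)
  have "(c + c = (a + b) * Suc (a + b) + a + a) = (c = triangle (a + b) + a)" for a b c :: nat
    using twice_triangle[of "a + b"] by linarith
  then show ?thesis by (simp add: Pair_eq_def prod_encode_def)
qed

lemma fv_Pair_eq [simp]: "fv (Pair_eq x y z) = vars_tm x \<union> vars_tm y \<union> vars_tm z"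
  by (auto simp: Pair_eq_def)

lemma bounded_Pair_eq [simp]: "bounded (Pair_eq x y z)"
  unfolding Pair_eq_def by (rule bounded_Eq)

definition godel_beta :: "nat \<Rightarrow> nat \<Rightarrow> nat \<Rightarrow> nat" where
  "godel_beta a d i = a mod Suc (d * Suc i)"

lemma coprime_godel_moduli:
  assumes "i < j" "j \<le> M"
  shows "coprime (Suc (fact M * Suc i)) (Suc (fact M * Suc j) :: nat)"
proof (rule coprimeI)
  fix c :: nat
  assume ci: "c dvd Suc (fact M * Suc i)" and cj: "c dvd Suc (fact M * Suc j)"
  have "coprime (Suc (fact M * Suc i)) (fact M)"
    by (metis coprime_mult_right_iff coprime_Suc_left_nat)
  then have coprime: "coprime c (fact M)" using ci by auto
  have "Suc (fact M * Suc j) - Suc (fact M * Suc i) = fact M * (j - i)"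
    using assms by (simp add: diff_mult_distrib2)
  then have "c dvd fact M * (j - i)" using dvd_diff_nat[OF cj ci] by simp
  then have "c dvd j - i" using coprime coprime_dvd_mult_right_iff by blast
  then have "0 < c" "c \<le> j - i" using assms by (auto intro!: dvd_imp_le Nat.gr0I)
  then have "c dvd fact M" using assms by (intro dvd_fact) auto
  then show "is_unit c" using coprime by auto
qed

text \<open>Goedel's lemma: any finite sequence is read off by \<open>godel_beta\<close> from two numbers;
  the moduli \<open>1 + M! (i + 1)\<close> are pairwise coprime, so the Chinese remainder theorem applies.\<close>

lemma godel_beta_exists: "\<exists>a d. \<forall>i\<le>n. godel_beta a d i = s i"
proof -
  define M where "M = Suc (n + sum s {..n})"
  define m where "m i = Suc (fact M * Suc i)" for i
  have "\<forall>i\<in>{..n}. \<forall>j\<in>{..n}. i \<noteq> j \<longrightarrow> coprime (m i) (m j)"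
  proof (intro ballI impI)
    fix i j assume "i \<in> {..n}" "j \<in> {..n}" "i \<noteq> j"
    then show "coprime (m i) (m j)"
      using coprime_godel_moduli[of i j M] coprime_godel_moduli[of j i M]
      by (cases "i < j") (auto simp: m_def M_def coprime_commute)
  qed
  then obtain a where a: "\<forall>i\<in>{..n}. [a = s i] (mod m i)"
    using chinese_remainder_nat[OF finite_atMost] by blast
  have "s i < m i" if "i \<le> n" for i
  proof -
    have "s i \<le> sum s {..n}" using that by (intro member_le_sum) auto
    also have "\<dots> < M" by (simp add: M_def)
    also have "M \<le> fact M * Suc i" using fact_ge_self[of M] by (simp add: le_trans)
    finally show ?thesis by (simp add: m_def)
  qed
  then have "\<forall>i\<le>n. godel_beta a (fact M) i = s i"
    using a by (auto simp: godel_beta_def m_def cong_def)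
  then show ?thesis by blast
qed

text \<open>\<open>r = godel_beta a d i\<close>; the variables \<open>b\<close> and \<open>b + 1\<close> serve as witness and quotient.\<close>

definition Beta_eq :: "nat \<Rightarrow> tm \<Rightarrow> tm \<Rightarrow> tm \<Rightarrow> tm \<Rightarrow> fm" where
  "Beta_eq b a d i r = Ex_lt (Suc b) b (Succ a)
     (Conj (Eq a (Plus (Times (Var (Suc b)) (Succ (Times d (Succ i)))) r))
           (Lt b r (Succ (Times d (Succ i)))))"

lemma ex_quotient_iff_mod:
  assumes "0 < m"
  shows "(\<exists>q<Suc a. a = q * m + r \<and> r < m) = (r = a mod m)"
proof
  show "\<exists>q<Suc a. a = q * m + r \<and> r < m" if "r = a mod m"
  proof (intro exI conjI)
    show "a div m < Suc a" by (rule le_imp_less_Suc[OF div_le_dividend])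
  qed (use that assms in simp_all)
qed auto

lemma ex_add_iff_le: "(\<exists>k. (a::nat) + k = b) = (a \<le> b)"
  by (auto simp: le_iff_add)

lemma holds_Beta_eq [simp]:
  assumes "b \<notin> vars_tm a \<union> vars_tm d \<union> vars_tm i \<union> vars_tm r"
    "Suc b \<notin> vars_tm a \<union> vars_tm d \<union> vars_tm i \<union> vars_tm r"
  shows "holds e (Beta_eq b a d i r) = (val e r = godel_beta (val e a) (val e d) (val e i))"
proof -
  have "holds e (Beta_eq b a d i r) =
      (\<exists>q<Suc (val e a). val e a = q * Suc (val e d * Suc (val e i)) + val e r
                        \<and> val e r < Suc (val e d * Suc (val e i)))"
    using assms by (simp add: Beta_eq_def holds_Lt less_Suc_eq_le ex_add_iff_le)
  also have "\<dots> = (val e r = godel_beta (val e a) (val e d) (val e i))"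
    unfolding godel_beta_def by (rule ex_quotient_iff_mod) simp
  finally show ?thesis .
qed

lemma fv_Beta_eq [simp]:
  assumes "b \<notin> vars_tm a \<union> vars_tm d \<union> vars_tm i \<union> vars_tm r"
    "Suc b \<notin> vars_tm a \<union> vars_tm d \<union> vars_tm i \<union> vars_tm r"
  shows "fv (Beta_eq b a d i r) = vars_tm a \<union> vars_tm d \<union> vars_tm i \<union> vars_tm r"
  using assms by (auto simp: Beta_eq_def)

lemma bounded_Beta_eq:
  assumes "b \<notin> vars_tm a \<union> vars_tm d \<union> vars_tm i \<union> vars_tm r"
    "Suc b \<notin> vars_tm a \<union> vars_tm d \<union> vars_tm i \<union> vars_tm r"
  shows "bounded (Beta_eq b a d i r)"
  unfolding Beta_eq_def using assms by (intro bounded.intros) auto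

definition numeral_code_seq :: "nat \<Rightarrow> nat \<Rightarrow> nat \<Rightarrow> nat \<Rightarrow> bool" where
  "numeral_code_seq n c a d \<longleftrightarrow> godel_beta a d 0 = 0 \<and>
     (\<forall>i<n. godel_beta a d (Suc i) = prod_encode (2, godel_beta a d i)) \<and> c = godel_beta a d n"

lemma prod_encode_0_0: "prod_encode (0, 0) = 0"
  by (simp add: prod_encode_def)

lemma numeral_code_seq_unique: "numeral_code_seq n c a d \<Longrightarrow> c = code_tm (num n)"
proof -
  assume seq: "numeral_code_seq n c a d"
  have "i \<le> n \<Longrightarrow> godel_beta a d i = code_tm (num i)" for i
    using seq by (induct i) (auto simp: numeral_code_seq_def prod_encode_0_0)
  then show ?thesis using seq by (simp add: numeral_code_seq_def)
qed

lemma numeral_code_seq_exists: "\<exists>a d. numeral_code_seq n (code_tm (num n)) a d"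
proof -
  obtain a d where "\<forall>i\<le>n. godel_beta a d i = code_tm (num i)"
    using godel_beta_exists[of n "\<lambda>i. code_tm (num i)"] by blast
  then have "numeral_code_seq n (code_tm (num n)) a d"
    unfolding numeral_code_seq_def by (simp add: prod_encode_0_0)
  then show ?thesis by blast
qed

text \<open>The auxiliary variables of the formulas below all lie in \<open>{b..b+12}\<close>, above the input
  variable \<open>u\<close>; the Goedel sequence is given by \<open>a = b + 11\<close> and \<open>d = b + 12\<close>, and the code of
  the numeral for \<open>u\<close> is \<open>b + 5\<close>.\<close>

definition Numeral_code_eq :: "nat \<Rightarrow> nat \<Rightarrow> fm" where
  "Numeral_code_eq b u =
     Conj (Beta_eq b (Var (b+11)) (Var (b+12)) Zero Zero)
     (Conj (All_lt (b+2) b (Var u) (Ex_lt (b+3) b (Succ (Var (b+11))) (Ex_lt (b+4) b (Succ (Var (b+11)))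
       (Conj (Beta_eq b (Var (b+11)) (Var (b+12)) (Var (b+2)) (Var (b+3)))
       (Conj (Beta_eq b (Var (b+11)) (Var (b+12)) (Succ (Var (b+2))) (Var (b+4)))
             (Pair_eq (num 2) (Var (b+3)) (Var (b+4))))))))
       (Beta_eq b (Var (b+11)) (Var (b+12)) (Var u) (Var (b+5))))"

lemma holds_Numeral_code_eq:
  "u < b \<Longrightarrow> holds e (Numeral_code_eq b u) = numeral_code_seq (e u) (e (b+5)) (e (b+11)) (e (b+12))"
  by (auto simp del: holds.simps(9,10)
           simp: Numeral_code_eq_def numeral_code_seq_def godel_beta_def
                 le_imp_less_Suc[OF mod_less_eq_dividend])

lemma fv_Numeral_code_eq: "u < b \<Longrightarrow> fv (Numeral_code_eq b u) \<subseteq> {u, b+5, b+11, b+12}"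
  by (simp add: Numeral_code_eq_def) auto

lemma bounded_Numeral_code_eq: "u < b \<Longrightarrow> bounded (Numeral_code_eq b u)"
  unfolding Numeral_code_eq_def by (intro bounded.intros bounded_Beta_eq bounded_Pair_eq) auto

definition code_Ex_Eq :: "nat \<Rightarrow> nat \<Rightarrow> nat \<Rightarrow> nat" where
  "code_Ex_Eq v c K = prod_encode (9, prod_encode (v, prod_encode (4,
     prod_encode (prod_encode (0, prod_encode (prod_encode (1, v), c)), K))))"

lemma gn_Ex_Conj_Eq: "gn (Ex v (Conj (Eq (Var v) t) a)) = code_Ex_Eq v (code_tm t) (gn a)"
  by (simp add: code_Ex_Eq_def)

text \<open>The intermediate codes are bounded by the final code \<open>z\<close>, so they can be quantified
  boundedly; the term \<open>K\<close> (in the input variable \<open>u\<close> only) gives the code of the body.\<close>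

definition Code_eq :: "nat \<Rightarrow> nat \<Rightarrow> tm \<Rightarrow> nat \<Rightarrow> nat \<Rightarrow> fm" where
  "Code_eq b v K u z =
     Ex_lt (b+5) b (Succ (Var z)) (Ex_lt (b+6) b (Succ (Var z)) (Ex_lt (b+7) b (Succ (Var z))
     (Ex_lt (b+8) b (Succ (Var z)) (Ex_lt (b+9) b (Succ (Var z)) (Ex_lt (b+10) b (Succ (Var z))
       (Conj (Numeral_code_eq b u)
       (Conj (Pair_eq (num (prod_encode (1, v))) (Var (b+5)) (Var (b+6)))
       (Conj (Pair_eq (num 0) (Var (b+6)) (Var (b+7)))
       (Conj (Pair_eq (Var (b+7)) K (Var (b+8)))
       (Conj (Pair_eq (num 4) (Var (b+8)) (Var (b+9)))
       (Conj (Pair_eq (num v) (Var (b+9)) (Var (b+10)))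
             (Pair_eq (num 9) (Var (b+10)) (Var z)))))))))))))"

lemma holds_Code_eq:
  assumes "u < b" "z \<noteq> u" "z < b \<or> b + 12 < z" "vars_tm K \<subseteq> {u}"
  shows "holds e (Code_eq b v K u z) \<longleftrightarrow>
    (\<exists>c. numeral_code_seq (e u) c (e (b+11)) (e (b+12)) \<and> e z = code_Ex_Eq v c (val e K))"
proof -
  have K: "x \<notin> vars_tm K" if "x \<noteq> u" for x using assms(4) that by auto
  have z: "z \<noteq> b" "z \<noteq> b+5" "z \<noteq> b+6" "z \<noteq> b+7" "z \<noteq> b+8" "z \<noteq> b+9" "z \<noteq> b+10"
    "z \<noteq> b+11" "z \<noteq> b+12" using assms(3) by auto
  have "holds e (Code_eq b v K u z) \<longleftrightarrow>
    (\<exists>c<Suc (e z). \<exists>p2<Suc (e z). \<exists>p3<Suc (e z). \<exists>p4<Suc (e z). \<exists>p5<Suc (e z). \<exists>p6<Suc (e z).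
       numeral_code_seq (e u) c (e (b+11)) (e (b+12)) \<and> p2 = prod_encode (prod_encode (1, v), c) \<and>
       p3 = prod_encode (0, p2) \<and> p4 = prod_encode (p3, val e K) \<and> p5 = prod_encode (4, p4) \<and>
       p6 = prod_encode (v, p5) \<and> e z = prod_encode (9, p6))"
    using assms(1,2) K z by (simp del: holds.simps(9,10) add: Code_eq_def holds_Numeral_code_eq)
  also have "\<dots> \<longleftrightarrow>
    (\<exists>c. numeral_code_seq (e u) c (e (b+11)) (e (b+12)) \<and> e z = code_Ex_Eq v c (val e K))"
    (is "?bounded \<longleftrightarrow> ?code")
  proof
    assume ?code
    then obtain c where c: "numeral_code_seq (e u) c (e (b+11)) (e (b+12))"
      "e z = code_Ex_Eq v c (val e K)" by blast
    define p2 where "p2 = prod_encode (prod_encode (1, v), c)"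
    define p3 where "p3 = prod_encode (0, p2)"
    define p4 where "p4 = prod_encode (p3, val e K)"
    define p5 where "p5 = prod_encode (4, p4)"
    define p6 where "p6 = prod_encode (v, p5)"
    have "c \<le> p2" "p2 \<le> p3" "p3 \<le> p4" "p4 \<le> p5" "p5 \<le> p6" "p6 \<le> e z"
      unfolding p2_def p3_def p4_def p5_def p6_def c(2) code_Ex_Eq_def
      by (simp_all add: le_prod_encode_1 le_prod_encode_2)
    then show ?bounded using c unfolding code_Ex_Eq_def
      by (intro exI[of _ c] exI[of _ p2] exI[of _ p3] exI[of _ p4] exI[of _ p5] exI[of _ p6])
         (simp add: p2_def p3_def p4_def p5_def p6_def)
  qed (auto simp: code_Ex_Eq_def)
  finally show ?thesis .
qed

lemma fv_Code_eq:
  assumes "u < b" "z \<noteq> u" "z < b \<or> b + 12 < z" "vars_tm K \<subseteq> {u}"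
  shows "fv (Code_eq b v K u z) \<subseteq> {u, z, b+11, b+12}"
  using fv_Numeral_code_eq[OF assms(1)] assms by (simp add: Code_eq_def) blast

lemma bounded_Code_eq:
  assumes "u < b" "z \<noteq> u" "z < b \<or> b + 12 < z" "vars_tm K \<subseteq> {u}"
  shows "bounded (Code_eq b v K u z)"
  unfolding Code_eq_def using assms
  by (intro bounded.intros bounded_Numeral_code_eq bounded_Pair_eq) auto

text \<open>The graph of \<open>n \<mapsto> code_Ex_Eq v (code_tm (num n)) K\<close> with input \<open>u\<close> and output \<open>z\<close>;
  the witness \<open>w\<close> bounds the output and the Goedel sequence.\<close>

definition Code_graph :: "nat \<Rightarrow> nat \<Rightarrow> tm \<Rightarrow> nat \<Rightarrow> nat \<Rightarrow> nat \<Rightarrow> fm" where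
  "Code_graph b v K u z w = Conj (Lt b (Var z) (Succ (Var w)))
     (Ex_lt (b+11) b (Succ (Var w)) (Ex_lt (b+12) b (Succ (Var w)) (Code_eq b v K u z)))"

definition code_graph_rel :: "nat \<Rightarrow> nat \<Rightarrow> nat \<Rightarrow> nat \<Rightarrow> nat \<Rightarrow> bool" where
  "code_graph_rel v n K l j \<longleftrightarrow> l < Suc j \<and>
     (\<exists>a<Suc j. \<exists>d<Suc j. \<exists>c. numeral_code_seq n c a d \<and> l = code_Ex_Eq v c K)"

definition graph_vars :: "nat \<Rightarrow> nat \<Rightarrow> nat \<Rightarrow> nat \<Rightarrow> bool" where
  "graph_vars b u z w \<longleftrightarrow> u < b \<and> z \<noteq> u \<and> w \<noteq> u \<and> z \<noteq> w \<and> (z < b \<or> b + 12 < z) \<and> b + 12 < w"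

lemma holds_Code_graph:
  assumes "graph_vars b u z w" "vars_tm K \<subseteq> {u}"
  shows "holds e (Code_graph b v K u z w) = code_graph_rel v (e u) (val e K) (e z) (e w)"
proof -
  have K: "x \<notin> vars_tm K" if "x \<noteq> u" for x using assms(2) that by auto
  have vars: "u < b" "z \<noteq> u" "z < b \<or> b + 12 < z" "z \<noteq> b" "z \<noteq> b+11" "z \<noteq> b+12"
    "w \<noteq> b" "w \<noteq> b+11" "w \<noteq> b+12" "z \<noteq> w" using assms(1) by (auto simp: graph_vars_def)
  then show ?thesis using K
    by (simp del: holds.simps(9,10)
             add: Code_graph_def holds_Lt holds_Code_eq[OF vars(1-3) assms(2)] code_graph_rel_def)
qed

lemma code_graph_rel_unique: "code_graph_rel v n K l j \<Longrightarrow> l = code_Ex_Eq v (code_tm (num n)) K"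
  by (auto simp: code_graph_rel_def dest: numeral_code_seq_unique)

lemma code_graph_rel_exists: "\<exists>j. code_graph_rel v n K (code_Ex_Eq v (code_tm (num n)) K) j"
proof -
  let ?f = "code_Ex_Eq v (code_tm (num n)) K"
  obtain a d where seq: "numeral_code_seq n (code_tm (num n)) a d"
    using numeral_code_seq_exists by blast
  have "a < Suc (max ?f (max a d))" "d < Suc (max ?f (max a d))" by auto
  then have "code_graph_rel v n K ?f (max ?f (max a d))"
    unfolding code_graph_rel_def using seq by auto
  then show ?thesis by blast
qed

lemma fv_Code_graph:
  assumes "graph_vars b u z w" "vars_tm K \<subseteq> {u}"
  shows "fv (Code_graph b v K u z w) \<subseteq> {u, z, w}"
proof -
  have "fv (Code_eq b v K u z) \<subseteq> {u, z, b+11, b+12}"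
    using assms by (intro fv_Code_eq) (auto simp: graph_vars_def)
  then show ?thesis using assms(1) by (auto simp: Code_graph_def graph_vars_def)
qed

lemma bounded_graph_Code_graph:
  assumes vars: "graph_vars b u z w" and K: "vars_tm K \<subseteq> {u}"
  shows "bounded_graph b (code_graph_rel v n (val (\<lambda>_. n) K))
           (subst u (num n) (Code_graph b v K u z w)) z w"
  unfolding bounded_graph_def
proof (intro conjI allI)
  have "u < b" "z \<noteq> u" "z < b \<or> b + 12 < z" "z \<noteq> w" "w \<noteq> u" "b + 12 < w"
    using vars by (auto simp: graph_vars_def)
  note vars' = this
  show "bounded (subst u (num n) (Code_graph b v K u z w))"
    unfolding Code_graph_def using vars' K
    by (intro bounded_subst bounded.intros bounded_Code_eq) auto
  show "fv (subst u (num n) (Code_graph b v K u z w)) \<subseteq> {z, w}"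
    using fv_Code_graph[OF vars K] by auto
  show "z \<noteq> w" "b \<notin> {z, w}" using vars' by auto
  show "holds e (subst u (num n) (Code_graph b v K u z w)) =
        code_graph_rel v n (val (\<lambda>_. n) K) (e z) (e w)" for e
  proof -
    have "val (e(u := n)) K = val (\<lambda>_. n) K" using K by (intro val_cong) auto
    then show ?thesis using vars' by (simp add: holds_subst holds_Code_graph[OF vars K])
  qed
  show "PA_prv (Imp (subst u (num n) (Code_graph b v K u z w)) (Lt b (Var z) (Succ (Var w))))"
    using vars' prv_conj_fst by (simp add: Code_graph_def)
qed

lemma represents_code_Ex_Eq:
  assumes "u < b" "z < b" "u \<noteq> z" "vars_tm K \<subseteq> {u}"
  shows "represents (Least_witness b (b+15) (b+14) (Code_graph b v K u) z (b+13)) u z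
           (\<lambda>n. code_Ex_Eq v (code_tm (num n)) (val (\<lambda>_. n) K))"
proof (rule represents_Least_witness)
  have vars: "graph_vars b u z (b+13)" "graph_vars b u (b+15) (b+14)"
    using assms by (auto simp: graph_vars_def)
  show "bounded_graph b (code_graph_rel v n (val (\<lambda>_. n) K))
          (subst u (num n) (Code_graph b v K u z (b+13))) z (b+13)"
       "bounded_graph b (code_graph_rel v n (val (\<lambda>_. n) K))
          (subst u (num n) (Code_graph b v K u (b+15) (b+14))) (b+15) (b+14)" for n
    using bounded_graph_Code_graph[OF vars(1) assms(4)] bounded_graph_Code_graph[OF vars(2) assms(4)]
    by blast+
  show "fv (Code_graph b v K u z (b+13)) \<subseteq> {u, z, b+13}"
       "fv (Code_graph b v K u (b+15) (b+14)) \<subseteq> {u, b+15, b+14}"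
    using fv_Code_graph[OF vars(1) assms(4)] fv_Code_graph[OF vars(2) assms(4)] by blast+
qed (use assms code_graph_rel_exists code_graph_rel_unique in auto)

lemma ex_represents_code_Ex_Eq:
  assumes "u \<noteq> z" "vars_tm K \<subseteq> {u}"
  shows "\<exists>R. represents R u z (\<lambda>n. code_Ex_Eq v (code_tm (num n)) (val (\<lambda>_. n) K))"
proof -
  have "u < Suc (max u z)" "z < Suc (max u z)" by auto
  then show ?thesis using represents_code_Ex_Eq assms by blast
qed


section \<open>The diagonal lemma and the theorem\<close>

lemma diagonal_lemma:
  assumes "fv \<chi> \<subseteq> {y}"
  shows "\<exists>\<tau>. sentence \<tau> \<and> PA_prv (Iff \<tau> (subst y (num (gn \<tau>)) \<chi>))"
proof -
  define v where "v = Suc y"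
  obtain D where D: "represents D v y (\<lambda>n. code_Ex_Eq v (code_tm (num n)) n)"
    using ex_represents_code_Ex_Eq[of v y "Var v" v] by (auto simp: v_def)
  define \<theta> where "\<theta> = Ex y (Conj D \<chi>)"
  define \<tau> where "\<tau> = Ex v (Conj (Eq (Var v) (num (gn \<theta>))) \<theta>)"
  have "PA_prv (Iff \<tau> (subst v (num (gn \<theta>)) \<theta>))"
    unfolding \<tau>_def by (rule prv_Ex_Eq_num_iff)
  moreover have "PA_prv (Iff (subst v (num (gn \<theta>)) \<theta>) (subst y (num (gn \<tau>)) \<chi>))"
    using prv_represents_iff[OF D assms, of "gn \<theta>"]
    unfolding \<theta>_def[symmetric] \<tau>_def gn_Ex_Conj_Eq .
  ultimately have "PA_prv (Iff \<tau> (subst y (num (gn \<tau>)) \<chi>))" by (rule prv_Iff_trans)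
  moreover have "sentence \<tau>"
    using D assms by (auto simp: sentence_def \<tau>_def \<theta>_def represents_def)
  ultimately show ?thesis by blast
qed

theorem mainTheorem1:
  fixes \<phi> :: fm and x :: nat
  assumes "fv \<phi> = {x}"
  shows "\<exists>\<sigma> \<tau>. sentence \<sigma> \<and> sentence \<tau> \<and>
           PA_prv (Iff \<sigma> (subst x (num (gn \<tau>)) \<phi>)) \<and>
           PA_prv (Iff \<tau> (Neg (subst x (num (gn \<sigma>)) \<phi>)))"
proof -
  obtain z where z: "z \<notin> vars_fm \<phi>" using ex_fresh_var[OF finite_vars_fm] by blast
  obtain H where H: "represents H (Suc z) z (\<lambda>n. code_Ex_Eq x (code_tm (num n)) (gn \<phi>))"
    using ex_represents_code_Ex_Eq[of "Suc z" z "num (gn \<phi>)" x] by auto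
  have fv: "fv (Neg (subst x (Var z) \<phi>)) \<subseteq> {z}" using fv_subst[of x "Var z" \<phi>] assms by auto
  define \<chi> where "\<chi> = Ex z (Conj H (Neg (subst x (Var z) \<phi>)))"
  have "fv \<chi> \<subseteq> {Suc z}" using H fv by (auto simp: \<chi>_def represents_def)
  then obtain \<tau> where \<tau>: "sentence \<tau>" "PA_prv (Iff \<tau> (subst (Suc z) (num (gn \<tau>)) \<chi>))"
    using diagonal_lemma by blast
  define \<sigma> where "\<sigma> = Ex x (Conj (Eq (Var x) (num (gn \<tau>))) \<phi>)"
  have "PA_prv (Iff (subst (Suc z) (num (gn \<tau>)) \<chi>) (Neg (subst x (num (gn \<sigma>)) \<phi>)))"
    using prv_represents_iff[OF H fv, of "gn \<tau>"]
    unfolding \<chi>_def[symmetric] \<sigma>_def gn_Ex_Conj_Eq subst.simps(4) subst_rename[OF z] .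
  moreover have "PA_prv (Iff \<sigma> (subst x (num (gn \<tau>)) \<phi>))"
    unfolding \<sigma>_def by (rule prv_Ex_Eq_num_iff)
  moreover have "sentence \<sigma>" using assms by (auto simp: sentence_def \<sigma>_def)
  ultimately show ?thesis using \<tau> prv_Iff_trans by blast
qed

end
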